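(* Let $\mathcal{C}$ be a concept class over $\{\pm1\}^n$, $\mathcal{D}$ a class of distributions closed under restrictions, and $D^\star$ a distribution that has a depth-$d$, size-$s$ subcube partition into $\mathcal{D}$. Let $A$ be a base learner that learns $\mathcal{C}$ over distributions in $\mathcal{D}$ to expected error $\le\frac{\varepsilon}{\log(1/\varepsilon)}$, with sample complexity $m$. Then for any $f\in\mathcal{C}$, with samples $S_{\mathrm{train}}$ and $S_{\mathrm{test}}$ drawn i.i.d. from $D^\star_f$ of sizes \[ m_{\mathrm{train}} := O\left(\frac{s\log(1/\varepsilon)}{\varepsilon}\cdot m\right), \qquad m_{\mathrm{test}} := O\left(\frac{s d\log(n)\log^3(1/\varepsilon)}{\varepsilon^2}\right), \] $\mathrm{PartitionLearn}_A(d,s,\varepsilon,S_{\mathrm{train}},S_{\mathrm{test}})$ returns a hypothesis $H$ satisfying $\mathbb{E}[\mathrm{error}(H,D^\star_f)]\le O(\varepsilon)$.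
   Context: A restriction is $\rho\in\{\pm1,\star\}^n$; $x\in\rho$ means $x_i=\rho_i$ or $\rho_i=\star$ for all $i$; depth of $\rho$ = number of non-$\star$ coordinates. $D_\rho$ is $D$ conditioned on $x\in\rho$; for labeled $S$, $S_\rho=\{(x,y)\in S:x\in\rho\}$. $\mathcal{D}$ is closed under restrictions if $D\in\mathcal{D}\Rightarrow D_\rho\in\mathcal{D}$ for all $\rho$. $D_f$ is the distribution of $(x,f(x))$, $x\sim D$; $\mathrm{error}(h,P)=\Pr_{(x,y)\sim P}[h(x)\ne y]$, $\mathrm{error}(h,S)$ = fraction of $(x,y)\in S$ with $h(x)\neq y$ (an output $\bot$ always counts as an error). $A$ learns $\mathcal{C}$ to expected error $\varepsilon'$ over $D$ with $m$ samples if for every $f\in\mathcal{C}$, given $m$ i.i.d. samples from $D_f$, its output $h$ has $\mathbb{E}[\mathrm{error}(h,D_f)]\le\varepsilon'$. $D^\star$ has a depth-$d$, size-$s$ subcube partition into $\mathcal{D}$ if there are $s$ pairwise disjoint restrictions $\rho_1,\dots,\rho_s$, each of depth $\le d$, such that every $x$ in the support of $D^\star$ lies in some $\rho_i$ and $(D^\star)_{\rho_i}\in\mathcal{D}$ for all $i$. For an ordered list $L$ of restrictions and map $\mathcal{H}$ from restrictions to hypotheses, the subcube list hypothesis $L\circ\mathcal{H}$ outputs $\mathcal{H}(\rho)(x)$ for the first $\rho\in L$ with $x\in\rho$, and $\bot$ if no such $\rho$ exists. Procedure $\mathrm{FindSubcubeList}(S_{\mathrm{test}},\mathcal{H},\varepsilon_a,s)$: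 set $S_{\mathrm{rem}}\leftarrow S_{\mathrm{test}}$, $L\leftarrow$ empty list; while $|S_{\mathrm{rem}}|/|S_{\mathrm{test}}|>\varepsilon_a$ and at most $\lceil 2s\ln(1/\varepsilon_a)\rceil$ iterations have run: among all restrictions $\rho$ of depth $\le d$ with $|(S_{\mathrm{rem}})_\rho|/|S_{\mathrm{rem}}|\ge\frac{1}{2s}$, choose $\rho^\star$ minimizing $\mathrm{error}(\mathcal{H}(\rho),(S_{\mathrm{rem}})_\rho)$, append $\rho^\star$ to $L$, and remove $(S_{\mathrm{rem}})_{\rho^\star}$ from $S_{\mathrm{rem}}$; return $L$. Algorithm $\mathrm{PartitionLearn}_A(d,s,\varepsilon,S_{\mathrm{train}},S_{\mathrm{test}})$: for every restriction $\rho$ of depth $\le d$ set $h_\rho\leftarrow A((S_{\mathrm{train}})_\rho)$ and $\mathcal{H}(\rho)=h_\rho$; then $L\leftarrow\mathrm{FindSubcubeList}(S_{\mathrm{test}},\mathcal{H},\varepsilon,s)$; return $L\circ\mathcal{H}$. *)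

theory Defs
  imports "HOL-Probability.Probability"
begin

text \<open>Points of the cube {+-1}^n are boolean lists of length n (True = +1, False = -1);
labels +-1 are booleans. A restriction is a list over {+-1, star}, encoded as
bool option list (None = star).\<close>

type_synonym point = "bool list"
type_synonym restr = "bool option list"
type_synonym sample = "(point \<times> bool) list"
type_synonym hyp = "point \<Rightarrow> bool"

definition in_restr :: "point \<Rightarrow> restr \<Rightarrow> bool" where
  "in_restr x \<rho> \<longleftrightarrow> length x = length \<rho> \<and>
     (\<forall>i < length \<rho>. \<rho> ! i = None \<or> \<rho> ! i = Some (x ! i))"

definition depth :: "restr \<Rightarrow> nat" where
  "depth \<rho> = length (filter (\<lambda>c. c \<noteq> None) \<rho>)"

definition restrs :: "nat \<Rightarrow> nat \<Rightarrow> restr set" where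
  "restrs n d = {\<rho>. length \<rho> = n \<and> depth \<rho> \<le> d}"

text \<open>D conditioned on x in rho (only meaningful when rho has positive mass).\<close>
definition restrict_pmf :: "point pmf \<Rightarrow> restr \<Rightarrow> point pmf" where
  "restrict_pmf D \<rho> = cond_pmf D {x. in_restr x \<rho>}"

definition closed_under_restrictions :: "nat \<Rightarrow> point pmf set \<Rightarrow> bool" where
  "closed_under_restrictions n \<D> \<longleftrightarrow>
     (\<forall>D \<in> \<D>. \<forall>\<rho>. length \<rho> = n \<longrightarrow> measure_pmf.prob D {x. in_restr x \<rho>} > 0 \<longrightarrow>
        restrict_pmf D \<rho> \<in> \<D>)"

definition labeled :: "point pmf \<Rightarrow> (point \<Rightarrow> bool) \<Rightarrow> (point \<times> bool) pmf" where
  "labeled D f = map_pmf (\<lambda>x. (x, f x)) D"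

definition error :: "hyp \<Rightarrow> (point \<times> bool) pmf \<Rightarrow> real" where
  "error h P = measure_pmf.prob P {(x, y). h x \<noteq> y}"

text \<open>Error of a hypothesis that may output bottom (None); bottom always counts as an error.\<close>
definition error_opt :: "(point \<Rightarrow> bool option) \<Rightarrow> (point \<times> bool) pmf \<Rightarrow> real" where
  "error_opt H P = measure_pmf.prob P {(x, y). H x \<noteq> Some y}"

definition sample_error :: "hyp \<Rightarrow> sample \<Rightarrow> real" where
  "sample_error h S = real (length (filter (\<lambda>(x, y). h x \<noteq> y) S)) / real (length S)"

definition learns :: "(sample \<Rightarrow> hyp) \<Rightarrow> (point \<Rightarrow> bool) set \<Rightarrow> point pmf set \<Rightarrow> nat \<Rightarrow> real \<Rightarrow> bool" where
  "learns A C \<D> m eps' \<longleftrightarrow>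
     (\<forall>D \<in> \<D>. \<forall>f \<in> C.
        measure_pmf.expectation (replicate_pmf m (labeled D f)) (\<lambda>S. error (A S) (labeled D f)) \<le> eps')"

text \<open>Convention: a learner with sample complexity m, given a larger sample, uses its first m examples.\<close>
definition uses_first :: "nat \<Rightarrow> (sample \<Rightarrow> hyp) \<Rightarrow> bool" where
  "uses_first m A \<longleftrightarrow> (\<forall>S. m \<le> length S \<longrightarrow> A S = A (take m S))"

definition has_subcube_partition :: "nat \<Rightarrow> nat \<Rightarrow> nat \<Rightarrow> point pmf \<Rightarrow> point pmf set \<Rightarrow> bool" where
  "has_subcube_partition n d s D \<D> \<longleftrightarrow>
     (\<exists>\<rho>s :: restr list. length \<rho>s = s \<and>
        (\<forall>i < s. length (\<rho>s ! i) = n \<and> depth (\<rho>s ! i) \<le> d) \<and>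
        (\<forall>i < s. \<forall>j < s. i \<noteq> j \<longrightarrow> \<not> (\<exists>x. in_restr x (\<rho>s ! i) \<and> in_restr x (\<rho>s ! j))) \<and>
        (\<forall>x \<in> set_pmf D. \<exists>i < s. in_restr x (\<rho>s ! i)) \<and>
        (\<forall>i < s. measure_pmf.prob D {x. in_restr x (\<rho>s ! i)} > 0 \<longrightarrow> restrict_pmf D (\<rho>s ! i) \<in> \<D>))"

definition restrict_sample :: "restr \<Rightarrow> sample \<Rightarrow> sample" where
  "restrict_sample \<rho> S = filter (\<lambda>(x, y). in_restr x \<rho>) S"

text \<open>Main loop of FindSubcubeList; the first nat argument is the number of iterations
still allowed. Ties in the arg-min are broken by an unspecified choice (SOME).\<close>
fun fsl_loop :: "nat \<Rightarrow> nat \<Rightarrow> (restr \<Rightarrow> hyp) \<Rightarrow> real \<Rightarrow> nat \<Rightarrow> sample \<Rightarrow> nat \<Rightarrow> sample \<Rightarrow> restr list \<Rightarrow> restr list" where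
  "fsl_loop n d H ea s Stest 0 Srem L = L"
| "fsl_loop n d H ea s Stest (Suc k) Srem L =
     (if real (length Srem) / real (length Stest) \<le> ea then L
      else (let cands = {\<rho> \<in> restrs n d.
                   real (length (restrict_sample \<rho> Srem)) / real (length Srem) \<ge> 1 / (2 * real s)};
                \<rho>' = (SOME \<rho>. \<rho> \<in> cands \<and>
                   (\<forall>\<rho>2 \<in> cands. sample_error (H \<rho>) (restrict_sample \<rho> Srem)
                                  \<le> sample_error (H \<rho>2) (restrict_sample \<rho>2 Srem)))
            in fsl_loop n d H ea s Stest k (filter (\<lambda>(x, y). \<not> in_restr x \<rho>') Srem) (L @ [\<rho>'])))"

definition find_subcube_list :: "nat \<Rightarrow> nat \<Rightarrow> sample \<Rightarrow> (restr \<Rightarrow> hyp) \<Rightarrow> real \<Rightarrow> nat \<Rightarrow> restr list" where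
  "find_subcube_list n d Stest H ea s =
     fsl_loop n d H ea s Stest (nat \<lceil>2 * real s * ln (1 / ea)\<rceil>) Stest []"

fun subcube_list_hyp :: "restr list \<Rightarrow> (restr \<Rightarrow> hyp) \<Rightarrow> point \<Rightarrow> bool option" where
  "subcube_list_hyp [] H x = None"
| "subcube_list_hyp (\<rho> # L) H x = (if in_restr x \<rho> then Some (H \<rho> x) else subcube_list_hyp L H x)"

definition partition_learn :: "(sample \<Rightarrow> hyp) \<Rightarrow> nat \<Rightarrow> nat \<Rightarrow> nat \<Rightarrow> real \<Rightarrow> sample \<Rightarrow> sample \<Rightarrow> point \<Rightarrow> bool option" where
  "partition_learn A n d s eps Strain Stest =
     (let H = (\<lambda>\<rho>. A (restrict_sample \<rho> Strain))
      in subcube_list_hyp (find_subcube_list n d Stest H eps s) H)"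

end

theory Submission
  imports Defs
begin

text \<open>
  Let \<open>\<rho>\<^sub>1, \<dots>, \<rho>\<^sub>s\<close> be the partition, \<open>p\<^sub>i\<close> the mass of \<open>\<rho>\<^sub>i\<close> and \<open>\<epsilon>' = \<epsilon> / ln(1/\<epsilon>)\<close>.
  The training points falling into \<open>\<rho>\<^sub>i\<close> are i.i.d. draws from \<open>(D\<^sup>\<star>)\<^bsub>\<rho>\<^sub>i\<^esub>\<close>, so once
  \<open>\<rho>\<^sub>i\<close> has received \<open>m\<close> of them the base learner errs there with probability at most \<open>\<epsilon>'\<close>;
  by a multiplicative Chernoff bound it receives fewer than \<open>m\<close> with probability at most
  \<open>e\<^bsup>m - N p\<^sub>i/2\<^esup>\<close>, which costs \<open>O(m/N)\<close> per piece. Hence the hypotheses \<open>h\<^bsub>\<rho>\<^sub>i\<^esub>\<close> have total expected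
  error \<open>W \<le> 2\<epsilon>'\<close> on the partition.

  FindSubcubeList is a greedy cover. Let \<open>M\<close> be the number of test points misclassified by
  the \<open>h\<^bsub>\<rho>\<^sub>i\<^esub>\<close>. While \<open>r > \<epsilon> N\<close> test points are uncovered, the pieces holding a \<open>1/(2s)\<close>
  fraction of them are candidates and together hold at least half of them, so the chosen cube,
  covering \<open>a\<close> of the \<open>r\<close> points, makes at most \<open>2 M a / r\<close> mistakes. The fractions \<open>a / r\<close>
  sum to at most \<open>ln(1/\<epsilon>) + 1\<close>, and \<open>2s ln(1/\<epsilon>)\<close> rounds leave at most \<open>\<epsilon> N\<close> points
  uncovered. Finally the output is one of at most \<open>(2n+1)\<^bsup>2ds ln(1/\<epsilon>)\<^esup>\<close> lists,
  and a union bound with the same lower-tail estimate transfers test error to true error.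
\<close>

section \<open>Expectations over i.i.d. samples\<close>

lemma integrable_measure_pmf_bounded:
  fixes f :: "'a \<Rightarrow> real"
  assumes "\<And>x. x \<in> set_pmf M \<Longrightarrow> \<bar>f x\<bar> \<le> B"
  shows "integrable (measure_pmf M) f"
  by (rule measure_pmf.integrable_const_bound[where B=B]) (use assms in \<open>auto simp: AE_measure_pmf_iff\<close>)

lemma abs_expectation_pmf_le:
  fixes f :: "'a \<Rightarrow> real"
  assumes "\<And>x. x \<in> set_pmf M \<Longrightarrow> \<bar>f x\<bar> \<le> B"
  shows "\<bar>measure_pmf.expectation M f\<bar> \<le> B"
proof -
  have "\<bar>measure_pmf.expectation M f\<bar> \<le> measure_pmf.expectation M (\<lambda>x. \<bar>f x\<bar>)"
    by (rule integral_abs_bound)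
  also have "\<dots> \<le> B"
    using assms by (intro measure_pmf.integral_le_const integrable_measure_pmf_bounded[where B=B])
      (auto simp: AE_measure_pmf_iff)
  finally show ?thesis .
qed

lemma expectation_cong_pmf:
  fixes f g :: "'a \<Rightarrow> real"
  assumes "\<And>x. x \<in> set_pmf M \<Longrightarrow> f x = g x"
  shows "measure_pmf.expectation M f = measure_pmf.expectation M g"
  using assms by (intro integral_cong_AE) (auto simp: AE_measure_pmf_iff)

lemma expectation_bind_pmf:
  fixes f :: "'b \<Rightarrow> real"
  assumes bounded: "\<And>y. y \<in> set_pmf (bind_pmf M N) \<Longrightarrow> \<bar>f y\<bar> \<le> B"
  shows "measure_pmf.expectation (bind_pmf M N) f =
         measure_pmf.expectation M (\<lambda>x. measure_pmf.expectation (N x) f)"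
proof -
  define f' where "f' y = (if y \<in> set_pmf (bind_pmf M N) then f y else 0)" for y
  have f'_bounded: "\<bar>f' y\<bar> \<le> \<bar>B\<bar>" for y
    using bounded unfolding f'_def by force
  have "measure_pmf.expectation (bind_pmf M N) f = measure_pmf.expectation (bind_pmf M N) f'"
    by (rule expectation_cong_pmf) (simp add: f'_def)
  also have "\<dots> = measure_pmf.expectation M (\<lambda>x. measure_pmf.expectation (N x) f')"
    unfolding measure_pmf_bind
    by (rule integral_bind[where K="count_space UNIV" and B="\<bar>B\<bar>" and B'=1])
      (use f'_bounded in \<open>auto simp: measure_pmf.emeasure_space_1 space_subprob_algebra
         prob_space_imp_subprob_space measure_pmf.prob_space_axioms
         intro!: measurable_pmf_measure1 measure_pmf.finite_measure_axioms\<close>)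
  also have "\<dots> = measure_pmf.expectation M (\<lambda>x. measure_pmf.expectation (N x) f)"
    by (intro expectation_cong_pmf) (auto simp: f'_def)
  finally show ?thesis .
qed

lemma expectation_pair_pmf:
  fixes f :: "'a \<times> 'b \<Rightarrow> real"
  assumes "\<And>z. \<bar>f z\<bar> \<le> B"
  shows "measure_pmf.expectation (pair_pmf M1 M2) f =
         measure_pmf.expectation M1 (\<lambda>a. measure_pmf.expectation M2 (\<lambda>b. f (a, b)))"
  unfolding pair_pmf_def using assms
  by (simp add: expectation_bind_pmf[where B=B] cong: expectation_cong_pmf)

lemma expectation_indicator_Collect:
  "measure_pmf.expectation P (\<lambda>x. if Q x then 1 else 0 :: real) = measure_pmf.prob P {x. Q x}"
proof -
  have "(\<lambda>x. if Q x then 1 else 0 :: real) = indicator {x. Q x}"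
    by (auto simp: indicator_def)
  then show ?thesis by simp
qed

lemma expectation_replicate_pmf_Suc:
  fixes F :: "'a list \<Rightarrow> real"
  assumes "\<And>S. length S = Suc k \<Longrightarrow> \<bar>F S\<bar> \<le> B"
  shows "measure_pmf.expectation (replicate_pmf (Suc k) P) F =
         measure_pmf.expectation P (\<lambda>x. measure_pmf.expectation (replicate_pmf k P) (\<lambda>S. F (x # S)))"
proof -
  have "measure_pmf.expectation (replicate_pmf (Suc k) P) F =
     measure_pmf.expectation P (\<lambda>x. measure_pmf.expectation
       (bind_pmf (replicate_pmf k P) (\<lambda>S. return_pmf (x # S))) F)"
    by (simp, rule expectation_bind_pmf[where B=B]) (use assms in \<open>auto simp: set_replicate_pmf\<close>)
  also have "\<dots> = measure_pmf.expectation P (\<lambda>x. measure_pmf.expectation (replicate_pmf k P) (\<lambda>S. F (x # S)))"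
    by (intro expectation_cong_pmf, subst expectation_bind_pmf[where B=B])
      (use assms in \<open>auto simp: set_replicate_pmf\<close>)
  finally show ?thesis .
qed

lemma expectation_replicate_pmf_prod_list:
  fixes g :: "'a \<Rightarrow> real"
  assumes "\<And>x. 0 \<le> g x" "\<And>x. g x \<le> 1"
  shows "measure_pmf.expectation (replicate_pmf k P) (\<lambda>S. prod_list (map g S)) =
         measure_pmf.expectation P g ^ k"
proof (induction k)
  case (Suc k)
  have "0 \<le> prod_list (map g S) \<and> prod_list (map g S) \<le> 1" for S
    by (induction S) (auto simp: assms intro: mult_le_one)
  then have "measure_pmf.expectation (replicate_pmf (Suc k) P) (\<lambda>S. prod_list (map g S)) =
      measure_pmf.expectation P (\<lambda>x. g x * measure_pmf.expectation (replicate_pmf k P) (\<lambda>S. prod_list (map g S)))"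
    by (subst expectation_replicate_pmf_Suc[where B=1]) auto
  then show ?case using Suc by simp
qed simp

lemma expectation_replicate_pmf_length_filter:
  "measure_pmf.expectation (replicate_pmf k P) (\<lambda>S. real (length (filter Q S))) =
   real k * measure_pmf.prob P {x. Q x}"
proof (induction k)
  case (Suc k)
  let ?count = "\<lambda>S. real (length (filter Q S))"
  have count_integrable: "integrable (measure_pmf (replicate_pmf k P)) ?count"
    by (rule integrable_measure_pmf_bounded[where B="real k"])
      (auto simp: set_replicate_pmf order_trans[OF length_filter_le])
  have "measure_pmf.expectation (replicate_pmf (Suc k) P) ?count =
     measure_pmf.expectation P (\<lambda>x. measure_pmf.expectation (replicate_pmf k P)
       (\<lambda>S. (if Q x then 1 else 0) + ?count S))"
  proof (subst expectation_replicate_pmf_Suc[where B="real (Suc k)"])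
    show "\<bar>?count S\<bar> \<le> real (Suc k)" if "length S = Suc k" for S
      using length_filter_le[of Q S] that by simp
  qed (auto intro!: expectation_cong_pmf)
  also have "\<dots> = measure_pmf.expectation P (\<lambda>x. (if Q x then 1 else 0) + real k * measure_pmf.prob P {x. Q x})"
    using count_integrable Suc by simp
  also have "\<dots> = real (Suc k) * measure_pmf.prob P {x. Q x}"
    by (subst Bochner_Integration.integral_add)
      (auto intro!: integrable_measure_pmf_bounded[where B=1]
        simp: expectation_indicator_Collect algebra_simps)
  finally show ?case .
qed simp

lemma expectation_exp_neg_length_filter_le:
  "measure_pmf.expectation (replicate_pmf k P) (\<lambda>S. exp (- real (length (filter Q S))))
     \<le> exp (- real k * measure_pmf.prob P {x. Q x} / 2)"
proof -
  define g where "g x = (if Q x then exp (-1) else (1::real))" for x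
  define p where "p = measure_pmf.prob P {x. Q x}"
  have g_prod: "prod_list (map g S) = exp (- real (length (filter Q S)))" for S
    by (induction S) (auto simp: g_def exp_add[symmetric] algebra_simps)
  have "measure_pmf.expectation P g = measure_pmf.expectation P (\<lambda>x. 1 - (1 - exp (-1)) * (if Q x then 1 else 0))"
    by (rule expectation_cong_pmf) (simp add: g_def)
  also have "\<dots> = 1 - (1 - exp (-1)) * p"
    by (subst Bochner_Integration.integral_diff)
      (auto intro!: integrable_measure_pmf_bounded[where B=1] simp: expectation_indicator_Collect p_def)
  also have "\<dots> \<le> 1 + (- p / 2)"
  proof -
    have "2 \<le> exp (1::real)"
      using exp_ge_add_one_self[of 1] by simp
    then have "exp (-1::real) \<le> 1 / 2"
      by (simp add: exp_minus field_simps)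
    then show ?thesis
      using mult_right_mono[of "exp (-1)" "1 / 2" p] by (simp add: p_def algebra_simps)
  qed
  also have "\<dots> \<le> exp (- p / 2)"
    by (rule exp_ge_add_one_self)
  finally have "measure_pmf.expectation P g ^ k \<le> exp (- p / 2) ^ k"
    by (intro power_mono) (auto simp: g_def)
  also have "\<dots> = exp (- real k * p / 2)"
    by (simp add: exp_of_nat_mult[symmetric])
  finally show ?thesis
    using expectation_replicate_pmf_prod_list[of g k P] by (simp add: g_def g_prod p_def)
qed

lemma prob_length_filter_le:
  "measure_pmf.prob (replicate_pmf k P) {S. real (length (filter Q S)) \<le> a}
     \<le> exp (a - real k * measure_pmf.prob P {x. Q x} / 2)"
proof -
  let ?count = "\<lambda>S. real (length (filter Q S))"
  have "measure_pmf.prob (replicate_pmf k P) {S. ?count S \<le> a}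
      = measure_pmf.expectation (replicate_pmf k P) (\<lambda>S. if ?count S \<le> a then 1 else 0)"
    by (simp add: expectation_indicator_Collect)
  also have "\<dots> \<le> measure_pmf.expectation (replicate_pmf k P) (\<lambda>S. exp a * exp (- ?count S))"
  proof (rule integral_mono)
    show "(if ?count S \<le> a then 1 else 0) \<le> exp a * exp (- ?count S)" for S
      by (simp add: mult_exp_exp)
  qed (auto intro!: integrable_measure_pmf_bounded[where B="exp a"] integrable_measure_pmf_bounded[where B=1])
  also have "\<dots> \<le> exp a * exp (- real k * measure_pmf.prob P {x. Q x} / 2)"
    using expectation_exp_neg_length_filter_le[of k P Q] by simp
  finally show ?thesis
    by (simp add: mult_exp_exp)
qed

lemma expectation_indicator_mult_cond_pmf:
  fixes \<phi> :: "'a \<Rightarrow> real"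
  assumes fin: "finite (set_pmf P)" and ne: "set_pmf P \<inter> Q \<noteq> {}"
  shows "measure_pmf.expectation P (\<lambda>x. indicator Q x * \<phi> x) =
         measure_pmf.prob P Q * measure_pmf.expectation (cond_pmf P Q) \<phi>"
proof -
  have pos: "measure_pmf.prob P Q > 0"
    using ne by (auto intro: measure_pmf_posI)
  have "measure_pmf.expectation P (\<lambda>x. indicator Q x * \<phi> x) = (\<Sum>a\<in>set_pmf P. indicator Q a * \<phi> a * pmf P a)"
    by (rule integral_measure_pmf_real) (use fin in auto)
  also have "\<dots> = measure_pmf.prob P Q * (\<Sum>a\<in>set_pmf P. \<phi> a * pmf (cond_pmf P Q) a)"
    unfolding sum_distrib_left
    by (rule sum.cong) (use pos in \<open>auto simp: pmf_cond[OF ne] indicator_def\<close>)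
  also have "(\<Sum>a\<in>set_pmf P. \<phi> a * pmf (cond_pmf P Q) a) = measure_pmf.expectation (cond_pmf P Q) \<phi>"
    by (rule integral_measure_pmf_real[symmetric]) (use fin ne in auto)
  finally show ?thesis .
qed

lemma expectation_if_cond_pmf:
  fixes \<phi> :: "'a \<Rightarrow> real"
  assumes fin: "finite (set_pmf P)" and ne: "set_pmf P \<inter> {x. Q x} \<noteq> {}"
    and bounded: "\<And>x. \<bar>\<phi> x\<bar> \<le> B"
  shows "measure_pmf.expectation P (\<lambda>x. if Q x then \<phi> x else c) =
         measure_pmf.prob P {x. Q x} * measure_pmf.expectation (cond_pmf P {x. Q x}) \<phi>
         + c * (1 - measure_pmf.prob P {x. Q x})"
proof -
  have "measure_pmf.expectation P (\<lambda>x. if Q x then \<phi> x else c) =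
      measure_pmf.expectation P (\<lambda>x. indicator {x. Q x} x * \<phi> x + c * (if \<not> Q x then 1 else 0))"
    by (rule expectation_cong_pmf) (auto simp: indicator_def)
  moreover have "measure_pmf.prob P {x. \<not> Q x} = 1 - measure_pmf.prob P {x. Q x}"
    using measure_pmf.prob_compl[of "{x. Q x}" P] by (simp add: Compl_eq_Diff_UNIV[symmetric] Collect_neg_eq)
  moreover have "\<bar>indicator {x. Q x} x * \<phi> x\<bar> \<le> B" for x
    using bounded[of x] abs_ge_zero[of "\<phi> x"] by (cases "Q x") auto
  then have "integrable (measure_pmf P) (\<lambda>x. indicator {x. Q x} x * \<phi> x)"
    by (blast intro: integrable_measure_pmf_bounded)
  moreover have "integrable (measure_pmf P) (\<lambda>x. c * (if \<not> Q x then 1 else 0))"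
    by (rule integrable_measure_pmf_bounded[where B="\<bar>c\<bar>"]) simp
  ultimately show ?thesis
    by (simp add: expectation_indicator_mult_cond_pmf[OF fin ne] expectation_indicator_Collect)
qed

text \<open>The first \<open>m\<close> points of an i.i.d. sample that satisfy \<open>Q\<close> are i.i.d. draws from \<open>P\<close>
  conditioned on \<open>Q\<close>; the inequality absorbs the event that fewer than \<open>m\<close> points satisfy \<open>Q\<close>.\<close>

lemma expectation_take_filter_replicate_pmf_le:
  fixes g :: "'a list \<Rightarrow> real"
  assumes fin: "finite (set_pmf P)" and ne: "set_pmf P \<inter> {x. Q x} \<noteq> {}"
    and "\<And>T. 0 \<le> g T" and "\<And>T. g T \<le> 1"
  shows "measure_pmf.expectation (replicate_pmf N P)
           (\<lambda>S. if m \<le> length (filter Q S) then g (take m (filter Q S)) else 0)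
         \<le> measure_pmf.expectation (replicate_pmf m (cond_pmf P {x. Q x})) g"
  using assms(3,4)
proof (induction N arbitrary: m g)
  case 0
  then show ?case by (cases m) auto
next
  case (Suc N)
  show ?case
  proof (cases m)
    case (Suc m')
    let ?C = "cond_pmf P {x. Q x}"
    define F where "F S = (if m \<le> length (filter Q S) then g (take m (filter Q S)) else 0)" for S
    define c where "c = measure_pmf.expectation (replicate_pmf m ?C) g"
    define \<phi> where "\<phi> x = measure_pmf.expectation (replicate_pmf m' ?C) (\<lambda>T. g (x # T))" for x
    define p where "p = measure_pmf.prob P {x. Q x}"
    have F_bounded: "\<bar>F S\<bar> \<le> 1" for S
      using Suc.prems[of "take m (filter Q S)"] by (auto simp: F_def)
    have \<phi>_bounded: "\<bar>\<phi> x\<bar> \<le> 1" for x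
      unfolding \<phi>_def using Suc.prems by (intro abs_expectation_pmf_le) (auto simp: abs_le_iff)
    have c_bounded: "\<bar>c\<bar> \<le> 1"
      unfolding c_def using Suc.prems by (intro abs_expectation_pmf_le) (auto simp: abs_le_iff)
    have "measure_pmf.expectation (replicate_pmf (Suc N) P) F =
       measure_pmf.expectation P (\<lambda>x. measure_pmf.expectation (replicate_pmf N P) (\<lambda>S. F (x # S)))"
      using F_bounded by (intro expectation_replicate_pmf_Suc[where B=1]) auto
    also have "\<dots> \<le> measure_pmf.expectation P (\<lambda>x. if Q x then \<phi> x else c)"
      \<comment> \<open>a first point satisfying \<open>Q\<close> becomes the first conditional draw, any other point is skipped\<close>
    proof (rule integral_mono)
      show "measure_pmf.expectation (replicate_pmf N P) (\<lambda>S. F (x # S)) \<le> (if Q x then \<phi> x else c)" for x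
      proof (cases "Q x")
        case True
        have "measure_pmf.expectation (replicate_pmf N P) (\<lambda>S. F (x # S)) =
           measure_pmf.expectation (replicate_pmf N P)
             (\<lambda>S. if m' \<le> length (filter Q S) then g (x # take m' (filter Q S)) else 0)"
          unfolding F_def \<open>m = Suc m'\<close> using True by (simp cong: if_cong)
        also have "\<dots> \<le> \<phi> x"
          unfolding \<phi>_def by (rule Suc.IH) (use Suc.prems in auto)
        finally show ?thesis using True by simp
      next
        case False
        then show ?thesis
          using Suc.IH[of g m, OF Suc.prems] by (simp add: F_def c_def cong: if_cong)
      qed
    qed (use F_bounded \<phi>_bounded c_bounded in
      \<open>auto intro!: integrable_measure_pmf_bounded[where B=1] abs_expectation_pmf_le\<close>)
    also have "\<dots> = p * measure_pmf.expectation ?C \<phi> + c * (1 - p)"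
      unfolding p_def by (rule expectation_if_cond_pmf[OF fin ne \<phi>_bounded])
    also have "measure_pmf.expectation ?C \<phi> = c"
      unfolding c_def \<phi>_def \<open>m = Suc m'\<close>
      by (rule expectation_replicate_pmf_Suc[symmetric, where B=1]) (use Suc.prems in \<open>auto simp: abs_le_iff\<close>)
    finally show ?thesis by (simp add: F_def c_def algebra_simps)
  qed simp
qed

section \<open>Training on a single subcube\<close>

lemma expectation_filter_replicate_pmf_le:
  fixes g :: "'a list \<Rightarrow> real"
  assumes fin: "finite (set_pmf P)" and ne: "set_pmf P \<inter> {x. Q x} \<noteq> {}"
    and g_nonneg: "\<And>T. 0 \<le> g T" and g_le_1: "\<And>T. g T \<le> 1"
    and g_take: "\<And>T. m \<le> length T \<Longrightarrow> g T = g (take m T)"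
  shows "measure_pmf.expectation (replicate_pmf N P) (\<lambda>S. g (filter Q S))
         \<le> measure_pmf.expectation (replicate_pmf m (cond_pmf P {x. Q x})) g
           + measure_pmf.prob (replicate_pmf N P) {S. length (filter Q S) < m}"
proof -
  let ?E = "measure_pmf.expectation (replicate_pmf N P)"
  let ?enough = "\<lambda>S. if m \<le> length (filter Q S) then g (take m (filter Q S)) else 0"
  let ?few = "\<lambda>S. if length (filter Q S) < m then 1 else 0 :: real"
  have integrable: "integrable (measure_pmf (replicate_pmf N P)) ?enough"
      "integrable (measure_pmf (replicate_pmf N P)) ?few"
    by (auto intro!: integrable_measure_pmf_bounded[where B=1] simp: abs_le_iff g_nonneg g_le_1)
  have "g (filter Q S) \<le> ?enough S + ?few S" for S
    using g_take[of "filter Q S"] g_le_1 by auto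
  then have "?E (\<lambda>S. g (filter Q S)) \<le> ?E (\<lambda>S. ?enough S + ?few S)"
    using integrable
    by (intro integral_mono) (auto intro!: integrable_measure_pmf_bounded[where B=1] simp: g_nonneg abs_le_iff g_le_1)
  also have "\<dots> = ?E ?enough + measure_pmf.prob (replicate_pmf N P) {S. length (filter Q S) < m}"
    using integrable by (simp add: expectation_indicator_Collect)
  also have "?E ?enough \<le> measure_pmf.expectation (replicate_pmf m (cond_pmf P {x. Q x})) g"
    by (rule expectation_take_filter_replicate_pmf_le[OF fin ne g_nonneg g_le_1])
  finally show ?thesis by simp
qed

text \<open>Either \<open>N p \<le> 4 m\<close>, or \<open>y e\<^sup>-\<^sup>y \<le> 1\<close> for \<open>y = N p / 4\<close>.\<close>

lemma mass_times_lower_tail_le: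
  fixes p N m \<pi> :: real
  assumes "0 \<le> p" "0 < N" "1 \<le> m" "0 \<le> \<pi>" "\<pi> \<le> 1" "\<pi> \<le> exp (m - N * p / 2)"
  shows "p * \<pi> \<le> 4 * m / N"
proof (cases "N * p \<le> 4 * m")
  case True
  have "p * \<pi> \<le> p"
    using assms by (simp add: mult_left_le)
  also have "p \<le> 4 * m / N"
    using True assms by (simp add: le_divide_eq mult.commute)
  finally show ?thesis .
next
  case False
  define y where "y = N * p / 4"
  have "m - N * p / 2 \<le> - y"
    using False by (simp add: y_def)
  then have "\<pi> \<le> exp (- y)"
    using assms(6) by (meson exp_le_cancel_iff order_trans)
  then have "p * \<pi> \<le> p * exp (- y)"
    using assms by (simp add: mult_left_mono)
  also have "\<dots> = 4 / N * (y * exp (- y))"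
    using assms by (simp add: y_def field_simps)
  also have "\<dots> \<le> 4 / N"
  proof -
    have "y \<le> exp y"
      using exp_ge_add_one_self[of y] by linarith
    then have "y * exp (- y) \<le> 1"
      by (simp add: exp_minus field_simps)
    then show ?thesis
      using assms mult_left_mono[of "y * exp (- y)" 1 "4 / N"] by simp
  qed
  also have "\<dots> \<le> 4 * m / N"
    using assms by (simp add: divide_right_mono)
  finally show ?thesis .
qed

lemma mass_times_prob_few_le:
  assumes "0 < m \<Longrightarrow> 0 < N"
  shows "measure_pmf.prob P {z. Q z} * measure_pmf.prob (replicate_pmf N P) {S. length (filter Q S) < m}
         \<le> 4 * real m / real N"
proof (cases "m = 0")
  case False
  have "measure_pmf.prob (replicate_pmf N P) {S. length (filter Q S) < m}
      \<le> measure_pmf.prob (replicate_pmf N P) {S. real (length (filter Q S)) \<le> real m}"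
    by (rule measure_pmf.finite_measure_mono) auto
  also have "\<dots> \<le> exp (real m - real N * measure_pmf.prob P {z. Q z} / 2)"
    by (rule prob_length_filter_le)
  finally show ?thesis
    using False assms by (intro mass_times_lower_tail_le) auto
qed simp

lemma prob_labeled_in_restr:
  "measure_pmf.prob (labeled D f) {(x, y). in_restr x \<rho>} = measure_pmf.prob D {x. in_restr x \<rho>}"
  by (simp add: labeled_def measure_map_pmf vimage_def)

lemma cond_pmf_labeled_in_restr:
  assumes "measure_pmf.prob D {x. in_restr x \<rho>} > 0"
  shows "cond_pmf (labeled D f) {(x, y). in_restr x \<rho>} = labeled (restrict_pmf D \<rho>) f"
proof -
  have "set_pmf D \<inter> (\<lambda>x. (x, f x)) -` {(x, y). in_restr x \<rho>} \<noteq> {}"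
    using assms measure_pmf_zero_iff[of D "{x. in_restr x \<rho>}"] by (auto simp: vimage_def)
  then show ?thesis
    unfolding labeled_def restrict_pmf_def by (subst cond_map_pmf) (simp_all add: vimage_def)
qed

lemma prob_labeled_in_restr_error:
  assumes fin: "finite (set_pmf D)" and pos: "measure_pmf.prob D {x. in_restr x \<rho>} > 0"
  shows "measure_pmf.prob (labeled D f) {(x, y). in_restr x \<rho> \<and> h x \<noteq> y} =
         measure_pmf.prob D {x. in_restr x \<rho>} * error h (labeled (restrict_pmf D \<rho>) f)"
proof -
  define R where "R = {(x::point, y::bool). h x \<noteq> y}"
  let ?in = "{(x::point, y::bool). in_restr x \<rho>}"
  have ne: "set_pmf (labeled D f) \<inter> ?in \<noteq> {}"
    using pos prob_labeled_in_restr[of D f \<rho>] measure_pmf_zero_iff[of "labeled D f" ?in] by simp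
  have "measure_pmf.prob (labeled D f) {(x, y). in_restr x \<rho> \<and> h x \<noteq> y} =
        measure_pmf.expectation (labeled D f) (\<lambda>z. indicator ?in z * indicator R z)"
    by (simp add: R_def indicator_inter_arith[symmetric] Int_def case_prod_unfold)
  also have "\<dots> = measure_pmf.prob (labeled D f) ?in * measure_pmf.expectation (cond_pmf (labeled D f) ?in) (indicator R)"
    using fin by (intro expectation_indicator_mult_cond_pmf ne) (simp add: labeled_def)
  finally show ?thesis
    by (simp add: prob_labeled_in_restr cond_pmf_labeled_in_restr[OF pos] R_def error_def)
qed

lemma expected_error_on_subcube_le:
  fixes D :: "point pmf" and A :: "sample \<Rightarrow> hyp"
  assumes fin: "finite (set_pmf D)" and N: "0 < m \<Longrightarrow> 0 < N"
    and learn: "measure_pmf.prob D {x. in_restr x \<rho>} > 0 \<Longrightarrow>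
       measure_pmf.expectation (replicate_pmf m (labeled (restrict_pmf D \<rho>) f))
         (\<lambda>S. error (A S) (labeled (restrict_pmf D \<rho>) f)) \<le> eps'"
    and first: "uses_first m A"
  shows "measure_pmf.expectation (replicate_pmf N (labeled D f))
           (\<lambda>S. measure_pmf.prob (labeled D f) {(x, y). in_restr x \<rho> \<and> A (restrict_sample \<rho> S) x \<noteq> y})
         \<le> measure_pmf.prob D {x. in_restr x \<rho>} * eps' + 4 * real m / real N"
proof -
  define P where "P = labeled D f"
  define p where "p = measure_pmf.prob D {x. in_restr x \<rho>}"
  define Q where "Q = (\<lambda>(x::point, y::bool). in_restr x \<rho>)"
  define Dr where "Dr = labeled (restrict_pmf D \<rho>) f"
  define g where "g = (\<lambda>T. error (A T) Dr)"
  let ?E = "measure_pmf.expectation (replicate_pmf N P)"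
  have prob_Q: "measure_pmf.prob P {z. Q z} = p"
    unfolding P_def p_def Q_def by (rule prob_labeled_in_restr)
  have fin_P: "finite (set_pmf P)"
    using fin by (simp add: P_def labeled_def)
  have restrict_Q: "restrict_sample \<rho> S = filter Q S" for S
    by (simp add: restrict_sample_def Q_def)
  show ?thesis
  proof (cases "p > 0")
    case False
    then have "p = 0"
      by (simp add: p_def not_less measure_le_0_iff)
    have "measure_pmf.prob P {(x, y). in_restr x \<rho> \<and> A (restrict_sample \<rho> S) x \<noteq> y} \<le> p" for S
      by (subst prob_Q[symmetric], rule measure_pmf.finite_measure_mono) (auto simp: Q_def)
    then have "?E (\<lambda>S. measure_pmf.prob P {(x, y). in_restr x \<rho> \<and> A (restrict_sample \<rho> S) x \<noteq> y}) \<le> 0"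
      using \<open>p = 0\<close> by (intro measure_pmf.integral_le_const integrable_measure_pmf_bounded[where B=1]) auto
    also have "0 \<le> 4 * real m / real N"
      by simp
    finally show ?thesis
      using \<open>p = 0\<close> unfolding P_def p_def by simp
  next
    case True
    have ne: "set_pmf P \<inter> {z. Q z} \<noteq> {}"
      using True prob_Q measure_pmf_zero_iff[of P "{z. Q z}"] by simp
    have cond: "cond_pmf P {z. Q z} = Dr"
      unfolding P_def Q_def Dr_def using True[unfolded p_def] by (rule cond_pmf_labeled_in_restr)
    have "?E (\<lambda>S. g (filter Q S)) \<le> measure_pmf.expectation (replicate_pmf m Dr) g
        + measure_pmf.prob (replicate_pmf N P) {S. length (filter Q S) < m}"
    proof (rule expectation_filter_replicate_pmf_le[OF fin_P ne, of g m N, unfolded cond])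
      show "g T = g (take m T)" if "m \<le> length T" for T
        using first that unfolding uses_first_def g_def by metis
    qed (simp_all add: g_def error_def)
    also have "measure_pmf.expectation (replicate_pmf m Dr) g \<le> eps'"
      using learn True by (simp add: g_def Dr_def p_def)
    finally have expected_g: "?E (\<lambda>S. g (filter Q S))
        \<le> eps' + measure_pmf.prob (replicate_pmf N P) {S. length (filter Q S) < m}" by simp
    have tail: "p * measure_pmf.prob (replicate_pmf N P) {S. length (filter Q S) < m} \<le> 4 * real m / real N"
      using mass_times_prob_few_le[of m N P Q] N prob_Q by simp
    have "?E (\<lambda>S. measure_pmf.prob P {(x, y). in_restr x \<rho> \<and> A (restrict_sample \<rho> S) x \<noteq> y})
        = p * ?E (\<lambda>S. g (filter Q S))"
      using prob_labeled_in_restr_error[OF fin True[unfolded p_def]]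
      by (simp add: P_def p_def g_def Dr_def restrict_Q)
    also have "\<dots> \<le> p * eps' + 4 * real m / real N"
      using mult_left_mono[OF expected_g, of p] True tail by (simp add: algebra_simps)
    finally show ?thesis
      by (simp add: P_def p_def)
  qed
qed

section \<open>The greedy subcube list\<close>

lemma length_filter_disj:
  assumes "\<And>z. \<not> (P z \<and> Q z)"
  shows "length (filter (\<lambda>z. P z \<or> Q z) S) = length (filter P S) + length (filter Q S)"
  using assms by (induction S) auto

lemma sum_length_filter_disjoint:
  assumes fin: "finite I"
    and disjoint: "\<And>z i j. z \<in> set S \<Longrightarrow> i \<in> I \<Longrightarrow> j \<in> I \<Longrightarrow> P i z \<Longrightarrow> P j z \<Longrightarrow> i = j"
  shows "(\<Sum>i\<in>I. length (filter (P i) S)) = length (filter (\<lambda>z. \<exists>i\<in>I. P i z) S)"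
  using disjoint
proof (induction S)
  case (Cons z S)
  have "(\<Sum>i\<in>I. length (filter (P i) (z # S))) = (\<Sum>i\<in>I. of_bool (P i z) + length (filter (P i) S))"
    by (rule sum.cong) auto
  also have "\<dots> = (\<Sum>i\<in>I. of_bool (P i z)) + (\<Sum>i\<in>I. length (filter (P i) S))"
    by (rule sum.distrib)
  also have "(\<Sum>i\<in>I. of_bool (P i z)) = (of_bool (\<exists>i\<in>I. P i z) :: nat)"
  proof (cases "\<exists>i\<in>I. P i z")
    case True
    then obtain i0 where "i0 \<in> I" "P i0 z" by blast
    then have "I \<inter> {i. P i z} = {i0}"
      using Cons.prems by auto
    then show ?thesis
      using fin True by simp
  qed simp
  moreover have "(\<Sum>i\<in>I. length (filter (P i) S)) = length (filter (\<lambda>z. \<exists>i\<in>I. P i z) S)"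
    using Cons.prems by (intro Cons.IH) auto
  ultimately show ?case
    by simp
qed simp

lemma finite_restrs: "finite (restrs n d)"
proof (rule finite_subset)
  show "restrs n d \<subseteq> {xs. set xs \<subseteq> UNIV \<and> length xs = n}"
    by (auto simp: restrs_def)
qed (rule finite_lists_length_eq, simp)

lemma subcube_list_hyp_snoc:
  "subcube_list_hyp (L @ [\<rho>]) H x =
     (case subcube_list_hyp L H x of
        None \<Rightarrow> if in_restr x \<rho> then Some (H \<rho> x) else None
      | Some v \<Rightarrow> Some v)"
  by (induction L) auto

definition uncovered :: "(restr \<Rightarrow> hyp) \<Rightarrow> restr list \<Rightarrow> point \<times> bool \<Rightarrow> bool" where
  "uncovered H L = (\<lambda>(x, y). subcube_list_hyp L H x = None)"

definition list_mistakes :: "(restr \<Rightarrow> hyp) \<Rightarrow> restr list \<Rightarrow> sample \<Rightarrow> nat" where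
  "list_mistakes H L S = length (filter (\<lambda>(x, y). \<exists>v. subcube_list_hyp L H x = Some v \<and> v \<noteq> y) S)"

definition partition_mistakes :: "(restr \<Rightarrow> hyp) \<Rightarrow> restr list \<Rightarrow> sample \<Rightarrow> nat" where
  "partition_mistakes H \<rho>s S =
     length (filter (\<lambda>(x, y). \<exists>i<length \<rho>s. in_restr x (\<rho>s ! i) \<and> H (\<rho>s ! i) x \<noteq> y) S)"

definition subcube_mistakes :: "(restr \<Rightarrow> hyp) \<Rightarrow> restr \<Rightarrow> sample \<Rightarrow> nat" where
  "subcube_mistakes H \<rho> S = length (filter (\<lambda>(x, y). in_restr x \<rho> \<and> H \<rho> x \<noteq> y) S)"

lemma uncovered_snoc:
  "uncovered H (L @ [\<rho>]) = (\<lambda>(x, y). subcube_list_hyp L H x = None \<and> \<not> in_restr x \<rho>)"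
  by (auto simp: uncovered_def subcube_list_hyp_snoc fun_eq_iff split: option.splits)

lemma list_mistakes_snoc:
  "list_mistakes H (L @ [\<rho>]) S = list_mistakes H L S + subcube_mistakes H \<rho> (filter (uncovered H L) S)"
proof -
  have "list_mistakes H (L @ [\<rho>]) S =
      length (filter (\<lambda>z. (\<lambda>(x, y). \<exists>v. subcube_list_hyp L H x = Some v \<and> v \<noteq> y) z \<or>
        (uncovered H L z \<and> (\<lambda>(x, y). in_restr x \<rho> \<and> H \<rho> x \<noteq> y) z)) S)"
    unfolding list_mistakes_def
    by (intro arg_cong[where f=length] filter_cong)
      (auto simp: subcube_list_hyp_snoc uncovered_def split: option.splits if_splits)
  also have "\<dots> = list_mistakes H L S + subcube_mistakes H \<rho> (filter (uncovered H L) S)"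
    unfolding list_mistakes_def subcube_mistakes_def
    by (subst length_filter_disj) (auto simp: uncovered_def filter_filter)
  finally show ?thesis .
qed

lemma length_filter_subcube_list_hyp_wrong:
  "length (filter (\<lambda>(x, y). subcube_list_hyp L H x \<noteq> Some y) S) =
   list_mistakes H L S + length (filter (uncovered H L) S)"
proof -
  have "filter (\<lambda>(x, y). subcube_list_hyp L H x \<noteq> Some y) S =
     filter (\<lambda>z. (\<lambda>(x, y). \<exists>v. subcube_list_hyp L H x = Some v \<and> v \<noteq> y) z \<or> uncovered H L z) S"
    by (rule filter_cong) (auto simp: uncovered_def)
  then show ?thesis
    unfolding list_mistakes_def by (simp add: length_filter_disj uncovered_def case_prod_unfold)
qed

text \<open>\<open>ln (r / c) + 1\<close> bounds the sum of the fractions \<open>a\<^sub>k / r\<^sub>k\<close> removed by greedy rounds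
  while the remaining mass \<open>r\<^sub>k\<close> decreases from \<open>r\<close> to below \<open>c\<close>.\<close>

definition potential :: "real \<Rightarrow> real \<Rightarrow> real" where
  "potential c r = (if r \<le> c then 0 else ln (r / c) + 1)"

lemma potential_nonneg:
  assumes "0 < c"
  shows "0 \<le> potential c r"
  using assms by (auto simp: potential_def)

lemma potential_step:
  assumes c: "0 < c" and a: "0 < a" "a \<le> r" and rc: "c < r"
  shows "a / r + potential c (r - a) \<le> potential c r"
proof (cases "r - a \<le> c")
  case True
  have "a / r \<le> 1"
    using a by simp
  moreover have "ln (r / c) > 0"
    using c rc by simp
  ultimately show ?thesis
    using True rc by (simp add: potential_def)
next
  case False
  have r_pos: "r > 0" and ra_pos: "r - a > 0"
    using False c rc by auto
  have "ln ((r - a) / r) \<le> (r - a) / r - 1"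
    by (rule ln_le_minus_one) (use ra_pos r_pos in simp)
  also have "\<dots> = - (a / r)"
    using r_pos by (simp add: field_simps)
  finally have "a / r \<le> - ln ((r - a) / r)"
    by simp
  moreover have "ln (r / c) = ln ((r - a) / c) - ln ((r - a) / r)"
    using r_pos ra_pos c by (simp add: ln_div)
  ultimately show ?thesis
    using False rc by (simp add: potential_def)
qed

lemma weighted_ratio_sum_le:
  fixes a b :: "'i \<Rightarrow> real"
  assumes "finite I" "J \<subseteq> I" "\<And>i. i \<in> I \<Longrightarrow> 0 \<le> b i" "0 \<le> \<beta>" "0 \<le> \<alpha>"
    and mass: "r \<le> 2 * (\<Sum>j\<in>J. a j)" and ratio: "\<And>j. j \<in> J \<Longrightarrow> \<beta> * a j \<le> \<alpha> * b j"
  shows "\<beta> * r \<le> 2 * \<alpha> * (\<Sum>i\<in>I. b i)"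
proof -
  have "\<beta> * r \<le> \<beta> * (2 * (\<Sum>j\<in>J. a j))"
    using mass \<open>0 \<le> \<beta>\<close> by (rule mult_left_mono)
  also have "\<dots> = 2 * (\<Sum>j\<in>J. \<beta> * a j)"
    by (simp add: sum_distrib_left mult.left_commute)
  also have "\<dots> \<le> 2 * (\<Sum>j\<in>J. \<alpha> * b j)"
    using ratio by (simp add: sum_mono)
  also have "\<dots> \<le> 2 * \<alpha> * (\<Sum>i\<in>I. b i)"
    using assms(1-3,5) by (simp add: sum_distrib_left[symmetric]) (intro mult_left_mono sum_mono2, auto)
  finally show ?thesis .
qed

definition candidates :: "nat \<Rightarrow> nat \<Rightarrow> nat \<Rightarrow> sample \<Rightarrow> restr set" where
  "candidates n d s S =
     {\<rho> \<in> restrs n d. real (length (restrict_sample \<rho> S)) / real (length S) \<ge> 1 / (2 * real s)}"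

definition greedy_choice :: "nat \<Rightarrow> nat \<Rightarrow> (restr \<Rightarrow> hyp) \<Rightarrow> nat \<Rightarrow> sample \<Rightarrow> restr" where
  "greedy_choice n d H s S =
     (SOME \<rho>. \<rho> \<in> candidates n d s S \<and>
        (\<forall>\<rho>2 \<in> candidates n d s S. sample_error (H \<rho>) (restrict_sample \<rho> S)
                                     \<le> sample_error (H \<rho>2) (restrict_sample \<rho>2 S)))"

lemma fsl_loop_Suc:
  "fsl_loop n d H ea s Stest (Suc k) Srem L =
     (if real (length Srem) / real (length Stest) \<le> ea then L
      else let \<rho> = greedy_choice n d H s Srem
           in fsl_loop n d H ea s Stest k (filter (\<lambda>(x, y). \<not> in_restr x \<rho>) Srem) (L @ [\<rho>]))"
  by (simp add: Let_def greedy_choice_def candidates_def)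

lemma greedy_choice_minimal:
  assumes "candidates n d s S \<noteq> {}"
  shows "greedy_choice n d H s S \<in> candidates n d s S"
    and "\<rho> \<in> candidates n d s S \<Longrightarrow>
         sample_error (H (greedy_choice n d H s S)) (restrict_sample (greedy_choice n d H s S) S)
         \<le> sample_error (H \<rho>) (restrict_sample \<rho> S)"
proof -
  let ?err = "\<lambda>\<rho>. sample_error (H \<rho>) (restrict_sample \<rho> S)"
  have "finite (candidates n d s S)"
    using finite_restrs by (simp add: candidates_def)
  then have "\<exists>\<rho>. \<rho> \<in> candidates n d s S \<and> (\<forall>\<rho>2 \<in> candidates n d s S. ?err \<rho> \<le> ?err \<rho>2)"
    using arg_min_if_finite[OF _ assms, of ?err] by (meson not_le order_less_imp_le)
  from someI_ex[OF this] show "greedy_choice n d H s S \<in> candidates n d s S"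
    and "\<rho> \<in> candidates n d s S \<Longrightarrow> ?err (greedy_choice n d H s S) \<le> ?err \<rho>"
    unfolding greedy_choice_def by blast+
qed

lemma sample_error_restrict_sample:
  "sample_error (H \<rho>) (restrict_sample \<rho> S) =
   real (subcube_mistakes H \<rho> S) / real (length (restrict_sample \<rho> S))"
proof -
  have "filter (\<lambda>(x, y). H \<rho> x \<noteq> y) (restrict_sample \<rho> S) = filter (\<lambda>(x, y). in_restr x \<rho> \<and> H \<rho> x \<noteq> y) S"
    unfolding restrict_sample_def by (simp add: filter_filter case_prod_unfold conj_commute)
  then show ?thesis
    by (simp add: sample_error_def subcube_mistakes_def)
qed

lemma mem_candidates_iff:
  assumes "S \<noteq> []" and "0 < s"
  shows "\<rho> \<in> candidates n d s S \<longleftrightarrow>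
         \<rho> \<in> restrs n d \<and> real (length S) \<le> 2 * real s * real (length (restrict_sample \<rho> S))"
  using assms by (auto simp: candidates_def field_simps)

lemma sum_length_restrict_sample_pieces:
  assumes cover: "\<forall>z\<in>set S. \<exists>i<s. in_restr (fst z) (\<rho>s ! i)"
    and disjoint: "\<forall>i<s. \<forall>j<s. i \<noteq> j \<longrightarrow> \<not> (\<exists>x. in_restr x (\<rho>s ! i) \<and> in_restr x (\<rho>s ! j))"
  shows "(\<Sum>i<s. length (restrict_sample (\<rho>s ! i) S)) = length S"
proof -
  have "(\<Sum>i<s. length (restrict_sample (\<rho>s ! i) S)) = length (filter (\<lambda>(x, y). \<exists>i<s. in_restr x (\<rho>s ! i)) S)"
    unfolding restrict_sample_def using disjoint
    by (subst sum_length_filter_disjoint) (auto simp: case_prod_unfold Bex_def)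
  also have "\<dots> = length S"
    using cover by (force intro!: arg_cong[where f=length] filter_True)
  finally show ?thesis .
qed

lemma candidate_pieces_carry_half:
  assumes S_ne: "S \<noteq> []" and s_pos: "0 < s"
    and pieces: "\<forall>i<s. \<rho>s ! i \<in> restrs n d"
    and cover: "\<forall>z\<in>set S. \<exists>i<s. in_restr (fst z) (\<rho>s ! i)"
    and disjoint: "\<forall>i<s. \<forall>j<s. i \<noteq> j \<longrightarrow> \<not> (\<exists>x. in_restr x (\<rho>s ! i) \<and> in_restr x (\<rho>s ! j))"
  shows "real (length S)
         \<le> 2 * (\<Sum>i | i < s \<and> \<rho>s ! i \<in> candidates n d s S. real (length (restrict_sample (\<rho>s ! i) S)))"
proof -
  define r where "r = real (length S)"
  define a where "a i = real (length (restrict_sample (\<rho>s ! i) S))" for i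
  define J where "J = {i. i < s \<and> \<rho>s ! i \<in> candidates n d s S}"
  have "(\<Sum>i\<in>{..<s} - J. a i) \<le> (\<Sum>i\<in>{..<s} - J. r / (2 * real s))"
    using pieces s_pos mem_candidates_iff[OF S_ne s_pos]
    by (intro sum_mono) (auto simp: J_def a_def r_def field_simps)
  also have "\<dots> \<le> real s * (r / (2 * real s))"
    unfolding sum_constant using card_mono[of "{..<s}" "{..<s} - J"] by (intro mult_right_mono) (auto simp: r_def)
  also have "\<dots> = r / 2"
    using s_pos by simp
  moreover have "(\<Sum>i<s. a i) = r"
    unfolding a_def r_def using sum_length_restrict_sample_pieces[OF cover disjoint] by (simp flip: of_nat_sum)
  moreover have "J \<subseteq> {..<s}"
    by (auto simp: J_def)
  ultimately show ?thesis
    using sum.subset_diff[of J "{..<s}" a] by (simp add: J_def a_def r_def)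
qed

text \<open>The candidate pieces carry at least half of the points, and on each of them the greedy
  choice has at most their error rate.\<close>

lemma greedy_choice_properties:
  fixes H :: "restr \<Rightarrow> hyp"
  assumes S_ne: "S \<noteq> []" and s_pos: "0 < s" and length_\<rho>s: "length \<rho>s = s"
    and pieces: "\<forall>i<s. \<rho>s ! i \<in> restrs n d"
    and cover: "\<forall>z\<in>set S. \<exists>i<s. in_restr (fst z) (\<rho>s ! i)"
    and disjoint: "\<forall>i<s. \<forall>j<s. i \<noteq> j \<longrightarrow> \<not> (\<exists>x. in_restr x (\<rho>s ! i) \<and> in_restr x (\<rho>s ! j))"
  defines "\<rho> \<equiv> greedy_choice n d H s S"
  shows "\<rho> \<in> restrs n d"
    and "real (length S) \<le> 2 * real s * real (length (restrict_sample \<rho> S))"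
    and "real (subcube_mistakes H \<rho> S) * real (length S)
         \<le> 2 * real (partition_mistakes H \<rho>s S) * real (length (restrict_sample \<rho> S))"
proof -
  define a where "a \<rho>' = real (length (restrict_sample \<rho>' S))" for \<rho>'
  define b where "b \<rho>' = real (subcube_mistakes H \<rho>' S)" for \<rho>'
  define J where "J = {i. i < s \<and> \<rho>s ! i \<in> candidates n d s S}"
  note candidate_iff = mem_candidates_iff[OF S_ne s_pos, where n=n and d=d]
  have half: "real (length S) \<le> 2 * (\<Sum>j\<in>J. a (\<rho>s ! j))"
    unfolding J_def a_def by (rule candidate_pieces_carry_half[OF S_ne s_pos pieces cover disjoint])
  then have "J \<noteq> {}"
    using S_ne by auto
  then have candidates_ne: "candidates n d s S \<noteq> {}"
    by (auto simp: J_def)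
  have chosen: "\<rho> \<in> candidates n d s S"
    unfolding \<rho>_def by (rule greedy_choice_minimal(1)[OF candidates_ne])
  have minimal: "sample_error (H \<rho>) (restrict_sample \<rho> S) \<le> sample_error (H \<rho>') (restrict_sample \<rho>' S)"
    if "\<rho>' \<in> candidates n d s S" for \<rho>'
    unfolding \<rho>_def by (rule greedy_choice_minimal(2)[OF candidates_ne that])
  from chosen show "\<rho> \<in> restrs n d" and "real (length S) \<le> 2 * real s * real (length (restrict_sample \<rho> S))"
    by (simp_all add: candidate_iff)
  have a_pos: "0 < a \<rho>'" if "\<rho>' \<in> candidates n d s S" for \<rho>'
  proof -
    have "real (length S) \<le> 2 * real s * a \<rho>'"
      using that candidate_iff[of \<rho>'] by (simp add: a_def)
    moreover have "0 < real (length S)"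
      using S_ne by simp
    ultimately have "0 < 2 * real s * a \<rho>'"
      by linarith
    then show ?thesis
      using s_pos by (simp add: zero_less_mult_iff)
  qed
  have "b \<rho> * a (\<rho>s ! j) \<le> a \<rho> * b (\<rho>s ! j)" if "j \<in> J" for j
  proof -
    have pos: "0 < a \<rho>" "0 < a (\<rho>s ! j)"
      using a_pos[OF chosen] a_pos[of "\<rho>s ! j"] that by (auto simp: J_def)
    have "b \<rho> * a (\<rho>s ! j) = b \<rho> / a \<rho> * (a \<rho> * a (\<rho>s ! j))"
      using pos by simp
    also have "\<dots> \<le> b (\<rho>s ! j) / a (\<rho>s ! j) * (a \<rho> * a (\<rho>s ! j))"
      using minimal[of "\<rho>s ! j"] that pos
      by (intro mult_right_mono) (simp_all add: J_def sample_error_restrict_sample a_def b_def)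
    also have "\<dots> = a \<rho> * b (\<rho>s ! j)"
      using pos by simp
    finally show ?thesis .
  qed
  then have "b \<rho> * real (length S) \<le> 2 * a \<rho> * (\<Sum>i<s. b (\<rho>s ! i))"
    using half a_pos[OF chosen] by (intro weighted_ratio_sum_le) (auto simp: J_def b_def)
  moreover have "(\<Sum>i<s. subcube_mistakes H (\<rho>s ! i) S) = partition_mistakes H \<rho>s S"
    unfolding subcube_mistakes_def partition_mistakes_def length_\<rho>s using disjoint
    by (subst sum_length_filter_disjoint) (auto simp: case_prod_unfold Bex_def)
  ultimately show "real (subcube_mistakes H \<rho> S) * real (length S)
      \<le> 2 * real (partition_mistakes H \<rho>s S) * real (length (restrict_sample \<rho> S))"
    by (simp add: a_def b_def algebra_simps flip: of_nat_sum)
qed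

lemma greedy_rounds_suffice:
  assumes "0 < ea" and "0 < s"
  shows "(1 - 1 / (2 * real s)) ^ nat \<lceil>2 * real s * ln (1 / ea)\<rceil> \<le> ea"
proof -
  define x where "x = 1 / (2 * real s)"
  define T where "T = nat \<lceil>2 * real s * ln (1 / ea)\<rceil>"
  have "0 \<le> x" "x \<le> 1"
    using assms by (auto simp: x_def field_simps)
  then have "(1 - x) ^ T \<le> exp (- x) ^ T"
    using exp_ge_add_one_self[of "- x"] by (intro power_mono) auto
  also have "\<dots> = exp (- (real T * x))"
    by (simp add: exp_of_nat_mult[symmetric])
  also have "\<dots> \<le> exp (- ln (1 / ea))"
  proof -
    have "real T \<ge> 2 * real s * ln (1 / ea)"
      unfolding T_def by linarith
    then have "real T * x \<ge> ln (1 / ea)"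
      using assms by (simp add: x_def field_simps)
    then show ?thesis
      by simp
  qed
  also have "\<dots> = ea"
    using assms by (simp add: ln_div)
  finally show ?thesis
    by (simp add: x_def T_def)
qed

context
  fixes n d s :: nat and H :: "restr \<Rightarrow> hyp" and ea :: real and Stest :: sample and \<rho>s :: "restr list"
  assumes Stest_ne: "Stest \<noteq> []" and ea_pos: "0 < ea" and s_pos: "0 < s" and length_\<rho>s: "length \<rho>s = s"
    and pieces: "\<forall>i<s. \<rho>s ! i \<in> restrs n d"
    and cover: "\<forall>z\<in>set Stest. \<exists>i<s. in_restr (fst z) (\<rho>s ! i)"
    and disjoint: "\<forall>i<s. \<forall>j<s. i \<noteq> j \<longrightarrow> \<not> (\<exists>x. in_restr x (\<rho>s ! i) \<and> in_restr x (\<rho>s ! j))"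
begin

lemma fsl_loop_Suc_cases:
  assumes Srem: "Srem = filter (uncovered H L) Stest"
  obtains (stop) "real (length Srem) \<le> ea * real (length Stest)"
      and "fsl_loop n d H ea s Stest (Suc k) Srem L = L"
  | (greedy) \<rho> where "fsl_loop n d H ea s Stest (Suc k) Srem L =
        fsl_loop n d H ea s Stest k (filter (uncovered H (L @ [\<rho>])) Stest) (L @ [\<rho>])"
      and "\<rho> \<in> restrs n d" and "ea * real (length Stest) < real (length Srem)"
      and "real (length (filter (uncovered H (L @ [\<rho>])) Stest)) =
           real (length Srem) - real (length (restrict_sample \<rho> Srem))"
      and "real (length Srem) \<le> 2 * real s * real (length (restrict_sample \<rho> Srem))"
      and "real (subcube_mistakes H \<rho> Srem) * real (length Srem)
           \<le> 2 * real (partition_mistakes H \<rho>s Stest) * real (length (restrict_sample \<rho> Srem))"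
proof (cases "real (length Srem) / real (length Stest) \<le> ea")
  case True
  then show ?thesis
    using stop Stest_ne by (simp add: fsl_loop_Suc divide_le_eq)
next
  case False
  define \<rho> where "\<rho> = greedy_choice n d H s Srem"
  have Srem_ne: "Srem \<noteq> []"
    using False ea_pos by auto
  have "\<forall>z\<in>set Srem. \<exists>i<s. in_restr (fst z) (\<rho>s ! i)"
    using cover Srem by auto
  note greedy_choice = greedy_choice_properties[OF Srem_ne s_pos length_\<rho>s pieces this disjoint,
      where H=H, folded \<rho>_def]
  have Srem': "filter (\<lambda>(x, y). \<not> in_restr x \<rho>) Srem = filter (uncovered H (L @ [\<rho>])) Stest"
    unfolding Srem uncovered_snoc by (simp add: filter_filter uncovered_def case_prod_unfold)
  have "length (restrict_sample \<rho> Srem) + length (filter (\<lambda>(x, y). \<not> in_restr x \<rho>) Srem) = length Srem"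
    using sum_length_filter_compl[of "\<lambda>(x, y). in_restr x \<rho>" Srem]
    unfolding restrict_sample_def by (simp add: case_prod_unfold)
  then have remaining: "real (length (filter (uncovered H (L @ [\<rho>])) Stest)) =
      real (length Srem) - real (length (restrict_sample \<rho> Srem))"
    unfolding Srem' by linarith
  have "partition_mistakes H \<rho>s Srem \<le> partition_mistakes H \<rho>s Stest"
    unfolding partition_mistakes_def Srem by (induction Stest) auto
  then have mistakes: "real (subcube_mistakes H \<rho> Srem) * real (length Srem)
      \<le> 2 * real (partition_mistakes H \<rho>s Stest) * real (length (restrict_sample \<rho> Srem))"
    using greedy_choice(3) by (smt (verit) mult_right_mono of_nat_0_le_iff of_nat_mono)
  have "fsl_loop n d H ea s Stest (Suc k) Srem L =
      fsl_loop n d H ea s Stest k (filter (uncovered H (L @ [\<rho>])) Stest) (L @ [\<rho>])"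
    using False unfolding fsl_loop_Suc Let_def \<rho>_def[symmetric] Srem' by simp
  moreover have "ea * real (length Stest) < real (length Srem)"
    using False Stest_ne by (simp add: divide_le_eq)
  ultimately show ?thesis
    using greedy greedy_choice(1,2) remaining mistakes by blast
qed

lemma fsl_loop_appends:
  assumes "Srem = filter (uncovered H L) Stest"
  shows "\<exists>L'. fsl_loop n d H ea s Stest k Srem L = L @ L' \<and> set L' \<subseteq> restrs n d \<and> length L' \<le> k"
  using assms
proof (induction k arbitrary: L Srem)
  case (Suc k)
  show ?case
  proof (cases rule: fsl_loop_Suc_cases[OF Suc.prems, of k, case_names stop greedy])
    case (greedy \<rho>)
    obtain L' where "fsl_loop n d H ea s Stest k (filter (uncovered H (L @ [\<rho>])) Stest) (L @ [\<rho>]) = (L @ [\<rho>]) @ L'"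
        and "set L' \<subseteq> restrs n d" "length L' \<le> k"
      using Suc.IH by blast
    then show ?thesis
      using greedy by (intro exI[of _ "\<rho> # L'"]) auto
  qed simp
qed simp

lemma fsl_loop_list_mistakes:
  assumes "Srem = filter (uncovered H L) Stest"
  shows "real (list_mistakes H (fsl_loop n d H ea s Stest k Srem L) Stest)
         \<le> real (list_mistakes H L Stest) +
           2 * real (partition_mistakes H \<rho>s Stest) * potential (ea * real (length Stest)) (real (length Srem))"
  using assms
proof (induction k arbitrary: L Srem)
  case 0
  have "0 \<le> potential (ea * real (length Stest)) (real (length Srem))"
    using ea_pos Stest_ne by (intro potential_nonneg) simp
  then show ?case
    by simp
next
  case (Suc k)
  let ?M = "real (partition_mistakes H \<rho>s Stest)" and ?c = "ea * real (length Stest)"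
  have c_pos: "0 < ?c"
    using ea_pos Stest_ne by simp
  show ?case
  proof (cases rule: fsl_loop_Suc_cases[OF Suc.prems, of k, case_names stop greedy])
    case stop
    then show ?thesis
      using potential_nonneg[OF c_pos] by simp
  next
    case (greedy \<rho>)
    define r where "r = real (length Srem)"
    define a where "a = real (length (restrict_sample \<rho> Srem))"
    have r_pos: "0 < r"
      using greedy(3) c_pos unfolding r_def by linarith
    have "0 < 2 * real s * a"
      using greedy(5) r_pos unfolding r_def a_def by linarith
    then have a_pos: "0 < a"
      using s_pos by (simp add: zero_less_mult_iff)
    have "real (subcube_mistakes H \<rho> Srem) \<le> 2 * ?M * (a / r)"
      using greedy(6) r_pos by (simp add: a_def r_def field_simps)
    then have snoc: "real (list_mistakes H (L @ [\<rho>]) Stest) \<le> real (list_mistakes H L Stest) + 2 * ?M * (a / r)"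
      unfolding list_mistakes_snoc Suc.prems[symmetric] by simp
    have "a \<le> r"
      using greedy(4) unfolding r_def a_def by (metis diff_ge_0_iff_ge of_nat_0_le_iff)
    then have step: "a / r + potential ?c (r - a) \<le> potential ?c r"
      using potential_step[OF c_pos a_pos] greedy(3) by (simp add: r_def)
    have "real (list_mistakes H (fsl_loop n d H ea s Stest (Suc k) Srem L) Stest)
        \<le> real (list_mistakes H (L @ [\<rho>]) Stest) + 2 * ?M * potential ?c (r - a)"
      using Suc.IH[where L="L @ [\<rho>]", OF refl] unfolding greedy(1,4) r_def a_def .
    also have "\<dots> \<le> real (list_mistakes H L Stest) + 2 * ?M * (a / r + potential ?c (r - a))"
      using snoc by (simp add: algebra_simps)
    also have "\<dots> \<le> real (list_mistakes H L Stest) + 2 * ?M * potential ?c r"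
      using mult_left_mono[OF step, of "2 * ?M"] by simp
    finally show ?thesis
      by (simp add: r_def)
  qed
qed

lemma fsl_loop_uncovered:
  assumes "Srem = filter (uncovered H L) Stest"
  shows "real (length (filter (uncovered H (fsl_loop n d H ea s Stest k Srem L)) Stest))
         \<le> max (ea * real (length Stest)) (real (length Srem) * (1 - 1 / (2 * real s)) ^ k)"
  using assms
proof (induction k arbitrary: L Srem)
  case 0
  then show ?case
    by simp
next
  case (Suc k)
  let ?c = "ea * real (length Stest)" and ?q = "1 - 1 / (2 * real s)"
  show ?case
  proof (cases rule: fsl_loop_Suc_cases[OF Suc.prems, of k, case_names stop greedy])
    case (greedy \<rho>)
    define r where "r = real (length Srem)"
    define a where "a = real (length (restrict_sample \<rho> Srem))"
    have "0 \<le> ?q"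
      using s_pos by (simp add: field_simps)
    have "r - a \<le> r * ?q"
      using greedy(5) s_pos by (simp add: r_def a_def field_simps)
    then have "(r - a) * ?q ^ k \<le> r * ?q * ?q ^ k"
      using \<open>0 \<le> ?q\<close> by (simp add: mult_right_mono)
    then have "(r - a) * ?q ^ k \<le> r * ?q ^ Suc k"
      by (simp add: mult.assoc)
    moreover have "real (length (filter (uncovered H (fsl_loop n d H ea s Stest (Suc k) Srem L)) Stest))
        \<le> max ?c ((r - a) * ?q ^ k)"
      using Suc.IH[where L="L @ [\<rho>]", OF refl] unfolding greedy(1,4) r_def a_def .
    ultimately show ?thesis
      unfolding r_def by (meson max.mono order_refl order_trans)
  next
    case stop
    then show ?thesis
      unfolding stop(2) Suc.prems[symmetric] by simp
  qed
qed

lemma find_subcube_list_bounds: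
  assumes ea_lt_1: "ea < 1"
  defines "L \<equiv> find_subcube_list n d Stest H ea s"
  shows "set L \<subseteq> restrs n d" and "length L \<le> nat \<lceil>2 * real s * ln (1 / ea)\<rceil>"
    and "real (length (filter (\<lambda>(x, y). subcube_list_hyp L H x \<noteq> Some y) Stest))
         \<le> 2 * real (partition_mistakes H \<rho>s Stest) * (ln (1 / ea) + 1) + ea * real (length Stest)"
proof -
  define T where "T = nat \<lceil>2 * real s * ln (1 / ea)\<rceil>"
  have start: "Stest = filter (uncovered H []) Stest"
    by (simp add: uncovered_def)
  have L: "L = fsl_loop n d H ea s Stest T Stest []"
    by (simp add: L_def find_subcube_list_def T_def)
  show "set L \<subseteq> restrs n d" and "length L \<le> nat \<lceil>2 * real s * ln (1 / ea)\<rceil>"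
    using fsl_loop_appends[OF start, of T] unfolding L T_def by auto
  have "potential (ea * real (length Stest)) (real (length Stest)) = ln (1 / ea) + 1"
    using ea_pos ea_lt_1 Stest_ne by (simp add: potential_def)
  then have "real (list_mistakes H L Stest) \<le> 2 * real (partition_mistakes H \<rho>s Stest) * (ln (1 / ea) + 1)"
    using fsl_loop_list_mistakes[OF start, of T] unfolding L by (simp add: list_mistakes_def)
  moreover have "real (length (filter (uncovered H L) Stest)) \<le> ea * real (length Stest)"
  proof -
    have "real (length Stest) * (1 - 1 / (2 * real s)) ^ T \<le> real (length Stest) * ea"
      using greedy_rounds_suffice[OF ea_pos s_pos] unfolding T_def by (intro mult_left_mono) simp_all
    then show ?thesis
      using fsl_loop_uncovered[OF start, of T] unfolding L by (simp add: mult.commute)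
  qed
  ultimately show "real (length (filter (\<lambda>(x, y). subcube_list_hyp L H x \<noteq> Some y) Stest))
      \<le> 2 * real (partition_mistakes H \<rho>s Stest) * (ln (1 / ea) + 1) + ea * real (length Stest)"
    by (simp add: length_filter_subcube_list_hyp_wrong)
qed

end

section \<open>From test error to true error\<close>

lemma prob_underestimate_le:
  assumes "0 < N"
  shows "measure_pmf.prob (replicate_pmf N P)
           {S. measure_pmf.prob P {z. Q z} > 2 * real (length (filter Q S)) / real N + ea}
         \<le> exp (- real N * ea / 2)"
proof -
  define q where "q = measure_pmf.prob P {z. Q z}"
  have "measure_pmf.prob (replicate_pmf N P) {S. q > 2 * real (length (filter Q S)) / real N + ea}
      \<le> measure_pmf.prob (replicate_pmf N P) {S. real (length (filter Q S)) \<le> real N * (q - ea) / 2}"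
    using assms by (intro measure_pmf.finite_measure_mono) (auto simp: field_simps)
  also have "\<dots> \<le> exp (real N * (q - ea) / 2 - real N * q / 2)"
    unfolding q_def by (rule prob_length_filter_le)
  also have "\<dots> = exp (- real N * ea / 2)"
    by (simp add: algebra_simps diff_divide_distrib)
  finally show ?thesis
    by (simp add: q_def)
qed

lemma prob_exists_underestimate_le:
  assumes "finite \<Lambda>" and "0 < N"
  shows "measure_pmf.prob (replicate_pmf N P)
           {S. \<exists>L\<in>\<Lambda>. measure_pmf.prob P {z. Q L z} > 2 * real (length (filter (Q L) S)) / real N + ea}
         \<le> real (card \<Lambda>) * exp (- real N * ea / 2)"
proof -
  let ?event = "\<lambda>L. {S. measure_pmf.prob P {z. Q L z} > 2 * real (length (filter (Q L) S)) / real N + ea}"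
  have "measure_pmf.prob (replicate_pmf N P) (\<Union>L\<in>\<Lambda>. ?event L)
      \<le> (\<Sum>L\<in>\<Lambda>. measure_pmf.prob (replicate_pmf N P) (?event L))"
    using assms(1) by (rule measure_pmf.finite_measure_subadditive_finite) simp
  also have "\<dots> \<le> (\<Sum>L\<in>\<Lambda>. exp (- real N * ea / 2))"
    using assms(2) by (intro sum_mono prob_underestimate_le)
  finally show ?thesis
    by (simp add: Collect_bex_eq)
qed

lemma error_opt_find_subcube_list_le:
  fixes P :: "(point \<times> bool) pmf" and H :: "restr \<Rightarrow> hyp"
  assumes S_ne: "S \<noteq> []" and ea: "0 < ea" "ea < 1" and s_pos: "0 < s" and length_\<rho>s: "length \<rho>s = s"
    and pieces: "\<forall>i<s. \<rho>s ! i \<in> restrs n d"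
    and cover: "\<forall>z\<in>set S. \<exists>i<s. in_restr (fst z) (\<rho>s ! i)"
    and disjoint: "\<forall>i<s. \<forall>j<s. i \<noteq> j \<longrightarrow> \<not> (\<exists>x. in_restr x (\<rho>s ! i) \<and> in_restr x (\<rho>s ! j))"
  defines "L \<equiv> find_subcube_list n d S H ea s"
  assumes close: "error_opt (subcube_list_hyp L H) P
      \<le> 2 * real (length (filter (\<lambda>(x, y). subcube_list_hyp L H x \<noteq> Some y) S)) / real (length S) + ea"
  shows "error_opt (subcube_list_hyp L H) P
         \<le> 4 * (ln (1 / ea) + 1) / real (length S) * real (partition_mistakes H \<rho>s S) + 3 * ea"
proof -
  have "real (length (filter (\<lambda>(x, y). subcube_list_hyp L H x \<noteq> Some y) S))
      \<le> 2 * real (partition_mistakes H \<rho>s S) * (ln (1 / ea) + 1) + ea * real (length S)"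
    unfolding L_def by (rule find_subcube_list_bounds(3)[OF S_ne ea(1) s_pos length_\<rho>s pieces cover disjoint ea(2)])
  then have "2 * real (length (filter (\<lambda>(x, y). subcube_list_hyp L H x \<noteq> Some y) S)) / real (length S) + ea
      \<le> 2 * (2 * real (partition_mistakes H \<rho>s S) * (ln (1 / ea) + 1) + ea * real (length S)) / real (length S) + ea"
    by (intro add_right_mono divide_right_mono) simp_all
  with close have "error_opt (subcube_list_hyp L H) P
      \<le> 2 * (2 * real (partition_mistakes H \<rho>s S) * (ln (1 / ea) + 1) + ea * real (length S)) / real (length S) + ea"
    by linarith
  also have "\<dots> = 4 * (ln (1 / ea) + 1) / real (length S) * real (partition_mistakes H \<rho>s S) + 3 * ea"
    using S_ne by (simp add: field_simps)
  finally show ?thesis .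
qed

text \<open>Off the event \<open>bad\<close>, which a union bound over all possible outputs of
  FindSubcubeList controls, the test error of the output is close to its true error.\<close>

lemma expected_error_find_subcube_list_le:
  fixes P :: "(point \<times> bool) pmf" and H :: "restr \<Rightarrow> hyp"
  assumes N: "0 < N" and ea: "0 < ea" "ea < 1" and s_pos: "0 < s" and length_\<rho>s: "length \<rho>s = s"
    and pieces: "\<forall>i<s. \<rho>s ! i \<in> restrs n d"
    and cover: "\<forall>z\<in>set_pmf P. \<exists>i<s. in_restr (fst z) (\<rho>s ! i)"
    and disjoint: "\<forall>i<s. \<forall>j<s. i \<noteq> j \<longrightarrow> \<not> (\<exists>x. in_restr x (\<rho>s ! i) \<and> in_restr x (\<rho>s ! j))"
  defines "\<Lambda> \<equiv> {L. set L \<subseteq> restrs n d \<and> length L \<le> nat \<lceil>2 * real s * ln (1 / ea)\<rceil>}"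
  shows "measure_pmf.expectation (replicate_pmf N P)
           (\<lambda>S. error_opt (subcube_list_hyp (find_subcube_list n d S H ea s) H) P)
         \<le> 4 * (ln (1 / ea) + 1) * measure_pmf.prob P {(x, y). \<exists>i<s. in_restr x (\<rho>s ! i) \<and> H (\<rho>s ! i) x \<noteq> y}
           + 3 * ea + real (card \<Lambda>) * exp (- real N * ea / 2)"
proof -
  define Lg where "Lg = ln (1 / ea)"
  define wrong where "wrong L = (\<lambda>(x, y). subcube_list_hyp L H x \<noteq> Some y)" for L
  define bad where "bad S \<longleftrightarrow> (\<exists>L\<in>\<Lambda>. measure_pmf.prob P {z. wrong L z} >
      2 * real (length (filter (wrong L) S)) / real N + ea)" for S
  define W where "W = measure_pmf.prob P {(x, y). \<exists>i<s. in_restr x (\<rho>s ! i) \<and> H (\<rho>s ! i) x \<noteq> y}"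
  let ?E = "measure_pmf.expectation (replicate_pmf N P)"
  let ?err = "\<lambda>S. error_opt (subcube_list_hyp (find_subcube_list n d S H ea s) H) P"
  let ?bound = "\<lambda>S. 4 * (Lg + 1) / real N * real (partition_mistakes H \<rho>s S) + 3 * ea + (if bad S then 1 else 0)"
  have pointwise: "?err S \<le> ?bound S" if "S \<in> set_pmf (replicate_pmf N P)" for S
  proof (cases "bad S")
    case True
    have "?err S \<le> 1" and "0 \<le> 4 * (Lg + 1) / real N * real (partition_mistakes H \<rho>s S)"
      using ea by (simp_all add: error_opt_def Lg_def)
    then show ?thesis
      using True ea by simp
  next
    case False
    have length_S: "length S = N" and "set S \<subseteq> set_pmf P"
      using that by (auto simp: set_replicate_pmf)
    then have S_ne: "S \<noteq> []" and cover_S: "\<forall>z\<in>set S. \<exists>i<s. in_restr (fst z) (\<rho>s ! i)"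
      using N cover by auto
    note bounds = find_subcube_list_bounds[OF S_ne ea(1) s_pos length_\<rho>s pieces cover_S disjoint ea(2), where H=H]
    have "find_subcube_list n d S H ea s \<in> \<Lambda>"
      using bounds(1,2) unfolding \<Lambda>_def by auto
    then have "?err S \<le> 2 * real (length (filter (wrong (find_subcube_list n d S H ea s)) S)) / real N + ea"
      using False unfolding bad_def by (simp add: not_less error_opt_def wrong_def case_prod_unfold)
    then show ?thesis
      using error_opt_find_subcube_list_le[OF S_ne ea s_pos length_\<rho>s pieces cover_S disjoint]
      by (simp add: wrong_def length_S Lg_def False)
  qed
  have integrable: "integrable (measure_pmf (replicate_pmf N P)) (\<lambda>S. real (partition_mistakes H \<rho>s S))"
    "integrable (measure_pmf (replicate_pmf N P)) (\<lambda>S. if bad S then 1 else 0 :: real)"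
     apply (rule integrable_measure_pmf_bounded[where B="real N"])
     apply (simp add: set_replicate_pmf partition_mistakes_def order_trans[OF length_filter_le])
    by (rule integrable_measure_pmf_bounded[where B=1]) simp
  have "?E ?err \<le> ?E ?bound"
    using integrable pointwise
    by (intro integral_mono_AE) (auto intro!: integrable_measure_pmf_bounded[where B=1]
        simp: error_opt_def AE_measure_pmf_iff)
  also have "\<dots> = 4 * (Lg + 1) / real N * ?E (\<lambda>S. real (partition_mistakes H \<rho>s S))
      + 3 * ea + measure_pmf.prob (replicate_pmf N P) {S. bad S}"
    using integrable by (simp add: expectation_indicator_Collect)
  also have "?E (\<lambda>S. real (partition_mistakes H \<rho>s S)) = real N * W"
    unfolding partition_mistakes_def W_def length_\<rho>s
    by (simp add: expectation_replicate_pmf_length_filter case_prod_unfold)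
  also have "measure_pmf.prob (replicate_pmf N P) {S. bad S} \<le> real (card \<Lambda>) * exp (- real N * ea / 2)"
  proof -
    have "finite \<Lambda>"
      unfolding \<Lambda>_def by (rule finite_lists_length_le[OF finite_restrs])
    then show ?thesis
      unfolding bad_def using N by (rule prob_exists_underestimate_le)
  qed
  finally show ?thesis
    using N by (simp add: Lg_def W_def)
qed

section \<open>Counting restrictions\<close>

lemma restrs_Suc:
  "restrs (Suc n) d = (\<lambda>\<rho>. None # \<rho>) ` restrs n d \<union>
     (if d = 0 then {}
      else (\<lambda>\<rho>. Some True # \<rho>) ` restrs n (d - 1) \<union> (\<lambda>\<rho>. Some False # \<rho>) ` restrs n (d - 1))"
    (is "_ = ?rhs")
proof (intro set_eqI iffI)
  fix \<rho> assume "\<rho> \<in> restrs (Suc n) d"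
  then obtain c \<rho>' where "\<rho> = c # \<rho>'" "length \<rho>' = n" "depth (c # \<rho>') \<le> d"
    by (auto simp: restrs_def length_Suc_conv)
  then show "\<rho> \<in> ?rhs"
    by (cases c) (auto simp: restrs_def depth_def image_iff)
next
  fix \<rho> assume "\<rho> \<in> ?rhs"
  then show "\<rho> \<in> restrs (Suc n) d"
    by (auto simp: restrs_def depth_def split: if_splits)
qed

lemma card_restrs: "card (restrs n d) \<le> (2 * n + 1) ^ d"
proof (induction n arbitrary: d)
  case 0
  have "restrs 0 d = {[]}"
    by (auto simp: restrs_def depth_def)
  then show ?case
    by simp
next
  case (Suc n)
  show ?case
  proof (cases d)
    case 0
    then show ?thesis
      using Suc.IH[of 0] card_image_le[OF finite_restrs, of "\<lambda>\<rho>. None # \<rho>" n 0]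
      unfolding restrs_Suc by simp
  next
    case (Suc d')
    have "card (restrs (Suc n) d) \<le> card (restrs n d) + (card (restrs n d') + card (restrs n d'))"
      unfolding restrs_Suc using Suc
      by (auto intro!: order_trans[OF card_Un_le] add_mono order_trans[OF card_image_le] finite_restrs)
    also have "\<dots> \<le> (2 * n + 1) * (2 * n + 1) ^ d' + 2 * (2 * n + 1) ^ d'"
      using Suc.IH[of d] Suc.IH[of d'] Suc by simp
    also have "\<dots> = (2 * n + 3) * (2 * n + 1) ^ d'"
      by (simp add: algebra_simps)
    also have "\<dots> \<le> (2 * Suc n + 1) * (2 * Suc n + 1) ^ d'"
      by (intro mult_mono power_mono) auto
    finally show ?thesis
      using Suc by simp
  qed
qed

lemma card_restrs_pos: "0 < card (restrs n d)"
proof -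
  have "replicate n None \<in> restrs n d"
    by (simp add: restrs_def depth_def)
  then show ?thesis
    using finite_restrs card_gt_0_iff by blast
qed

lemma card_restrs_le_exp:
  assumes "2 \<le> n"
  shows "real (card (restrs n d)) \<le> exp (3 * real d * ln (real n))"
proof -
  have "2 * n + 1 \<le> n * n * n"
  proof -
    have "2 * 2 * n \<le> n * n * n"
      using mult_le_mono1[OF mult_le_mono[OF assms assms], of n] by simp
    then show ?thesis
      using assms by linarith
  qed
  then have "real (2 * n + 1) \<le> real n ^ 3"
    by (simp add: power3_eq_cube flip: of_nat_mult)
  then have "real (card (restrs n d)) \<le> (real n ^ 3) ^ d"
    using card_restrs[of n d] by (metis of_nat_le_iff of_nat_power order_trans power_mono of_nat_0_le_iff)
  also have "\<dots> = exp (ln (real n)) ^ (3 * d)"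
    using assms by (simp add: power_mult)
  also have "\<dots> = exp (3 * real d * ln (real n))"
    by (simp add: exp_of_nat_mult[symmetric] mult.assoc)
  finally show ?thesis .
qed

lemma sum_powers_le_exp:
  fixes K T :: nat
  assumes "0 < K"
  shows "real (\<Sum>i\<le>T. K ^ i) \<le> exp (real T) * real K ^ T"
proof -
  have "(\<Sum>i\<le>T. K ^ i) \<le> (\<Sum>i\<le>T. K ^ T)"
    using assms by (intro sum_mono power_increasing) auto
  then have "real (\<Sum>i\<le>T. K ^ i) \<le> real (\<Sum>i\<le>T. K ^ T)"
    by (simp only: of_nat_le_iff)
  also have "\<dots> = (real T + 1) * real K ^ T"
    by (simp add: algebra_simps)
  also have "\<dots> \<le> exp (real T) * real K ^ T"
    using exp_ge_add_one_self[of "real T"] by (intro mult_right_mono) (auto simp: add.commute)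
  finally show ?thesis .
qed

lemma test_size_ge:
  fixes c eps :: real
  assumes eps: "0 < eps" "eps < 1" and L_ge_1: "1 \<le> ln (1 / eps)" and "0 \<le> c"
    and N: "40 * (c * ln (1 / eps) ^ 3 / eps ^ 2) \<le> real N"
  shows "20 * (c * ln (1 / eps)) \<le> real N * eps / 2"
proof -
  define L where "L = ln (1 / eps)"
  have "1 \<le> L ^ 2"
    using L_ge_1 by (simp add: L_def one_le_power)
  also have "\<dots> \<le> L ^ 2 / eps"
    using eps by (simp add: le_divide_eq mult_left_le)
  finally have "c * L \<le> c * L * (L ^ 2 / eps)"
    using mult_left_mono[of 1 "L ^ 2 / eps" "c * L"] \<open>0 \<le> c\<close> L_ge_1 by (simp add: L_def)
  then have "20 * (c * L) \<le> 40 * (c * L ^ 3 / eps ^ 2) * eps / 2"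
    using eps by (simp add: power2_eq_square power3_eq_cube field_simps)
  also have "\<dots> \<le> real N * eps / 2"
    using N eps unfolding L_def by (intro divide_right_mono mult_right_mono) auto
  finally show ?thesis
    by (simp add: L_def)
qed

text \<open>With \<open>a = s ln(1/\<epsilon>) \<ge> 1\<close>, \<open>b = d ln n \<ge> 1/2\<close> and \<open>T \<le> 3 a\<close>, the exponent
  \<open>T (1 + 3 b) - N \<epsilon> / 2\<close> is at most \<open>3a + 9ab - 20ab \<le> -ln(1/\<epsilon>)\<close>.\<close>

lemma union_bound_term_le:
  fixes n d s T N K :: nat and eps :: real
  assumes n: "2 \<le> n" and d: "1 \<le> d" and s: "1 \<le> s" and eps: "0 < eps" "eps < 1"
    and L_ge_1: "ln (1 / eps) \<ge> 1" and T: "T = nat \<lceil>2 * real s * ln (1 / eps)\<rceil>"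
    and K: "0 < K" "real K \<le> exp (3 * real d * ln (real n))"
    and N: "real N \<ge> 40 * (real s * real d * ln (real n) * ln (1 / eps) ^ 3 / eps ^ 2)"
  shows "real (\<Sum>i\<le>T. K ^ i) * exp (- real N * eps / 2) \<le> eps"
proof -
  define L where "L = ln (1 / eps)"
  define a where "a = real s * L"
  define b where "b = real d * ln (real n)"
  define X where "X = real N * eps / 2"
  have a_ge_1: "a \<ge> 1"
    using mult_mono[of 1 "real s" 1 L] s L_ge_1 by (simp add: a_def L_def)
  have b_ge_half: "b \<ge> 1 / 2"
  proof -
    have "ln 2 \<le> ln (real n)"
      using n by simp
    then have "2 / 3 \<le> ln (real n)"
      using ln2_ge_two_thirds by linarith
    then show ?thesis
      using mult_mono[of 1 "real d" "2 / 3" "ln (real n)"] d by (simp add: b_def)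
  qed
  have "real T \<le> 2 * real s * L + 1"
    using a_ge_1 unfolding T L_def[symmetric] a_def by linarith
  then have "real T * (1 + 3 * b) \<le> 3 * a * (1 + 3 * b)"
    using a_ge_1 b_ge_half by (intro mult_right_mono) (auto simp: a_def)
  moreover have "a \<le> 2 * (a * b)"
    using mult_left_mono[of 1 "2 * b" a] a_ge_1 b_ge_half by simp
  moreover have "3 * a * (1 + 3 * b) = 3 * a + 9 * (a * b)"
    by (simp add: algebra_simps)
  moreover have "L \<le> a"
    using mult_right_mono[of 1 "real s" L] s L_ge_1 by (simp add: a_def L_def)
  moreover have "20 * (a * b) \<le> X"
  proof -
    have "a * b = real s * real d * ln (real n) * L"
      by (simp add: a_def b_def algebra_simps)
    moreover have "0 \<le> real s * real d * ln (real n)"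
      using n by simp
    ultimately show ?thesis
      using test_size_ge[OF eps L_ge_1 _ N] unfolding X_def L_def by simp
  qed
  ultimately have exponent: "real T * (1 + 3 * b) - X \<le> - L"
    using a_ge_1 by linarith
  have "real K ^ T \<le> exp (3 * b) ^ T"
    using power_mono[OF K(2), of T] by (simp add: b_def mult.assoc)
  then have "real (\<Sum>i\<le>T. K ^ i) \<le> exp (real T) * exp (3 * b) ^ T"
    using sum_powers_le_exp[OF K(1), of T] by (meson exp_gt_zero less_imp_le mult_left_mono order_trans)
  also have "\<dots> = exp (real T * (1 + 3 * b))"
    by (simp add: exp_of_nat_mult[symmetric] mult_exp_exp algebra_simps)
  finally have "real (\<Sum>i\<le>T. K ^ i) * exp (- X) \<le> exp (real T * (1 + 3 * b) - X)"
    by (simp add: exp_diff exp_minus divide_inverse mult_right_mono)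
  also have "\<dots> \<le> exp (- L)"
    using exponent by simp
  also have "\<dots> = eps"
    using eps by (simp add: L_def ln_div)
  finally show ?thesis
    by (simp add: X_def)
qed

section \<open>Expected error of PartitionLearn\<close>

lemma expected_partition_error_le:
  fixes D :: "point pmf" and A :: "sample \<Rightarrow> hyp"
  assumes fin: "finite (set_pmf D)"
    and disjoint: "\<forall>i<s. \<forall>j<s. i \<noteq> j \<longrightarrow> \<not> (\<exists>x. in_restr x (\<rho>s ! i) \<and> in_restr x (\<rho>s ! j))"
    and learn: "\<And>i. i < s \<Longrightarrow> measure_pmf.prob D {x. in_restr x (\<rho>s ! i)} > 0 \<Longrightarrow>
       measure_pmf.expectation (replicate_pmf m (labeled (restrict_pmf D (\<rho>s ! i)) f))
         (\<lambda>S. error (A S) (labeled (restrict_pmf D (\<rho>s ! i)) f)) \<le> eps'"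
    and first: "uses_first m A"
    and eps'_nonneg: "0 \<le> eps'" and N: "4 * real s * real m \<le> eps' * real N"
  shows "measure_pmf.expectation (replicate_pmf N (labeled D f))
           (\<lambda>S. measure_pmf.prob (labeled D f)
              {(x, y). \<exists>i<s. in_restr x (\<rho>s ! i) \<and> A (restrict_sample (\<rho>s ! i) S) x \<noteq> y})
         \<le> 2 * eps'"
proof -
  let ?E = "measure_pmf.expectation (replicate_pmf N (labeled D f))"
  define p where "p i = measure_pmf.prob D {x. in_restr x (\<rho>s ! i)}" for i
  define X where "X i S = measure_pmf.prob (labeled D f)
    {(x, y). in_restr x (\<rho>s ! i) \<and> A (restrict_sample (\<rho>s ! i) S) x \<noteq> y}" for i S
  have integrable_X: "integrable (measure_pmf (replicate_pmf N (labeled D f))) (X i)" for i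
    by (rule integrable_measure_pmf_bounded[where B=1]) (simp add: X_def)
  have "?E (\<lambda>S. measure_pmf.prob (labeled D f)
      {(x, y). \<exists>i<s. in_restr x (\<rho>s ! i) \<and> A (restrict_sample (\<rho>s ! i) S) x \<noteq> y})
      \<le> ?E (\<lambda>S. \<Sum>i<s. X i S)"
  proof (rule integral_mono)
    fix S
    have "{(x, y). \<exists>i<s. in_restr x (\<rho>s ! i) \<and> A (restrict_sample (\<rho>s ! i) S) x \<noteq> y} =
        (\<Union>i<s. {(x, y). in_restr x (\<rho>s ! i) \<and> A (restrict_sample (\<rho>s ! i) S) x \<noteq> y})"
      by auto
    then show "measure_pmf.prob (labeled D f)
        {(x, y). \<exists>i<s. in_restr x (\<rho>s ! i) \<and> A (restrict_sample (\<rho>s ! i) S) x \<noteq> y} \<le> (\<Sum>i<s. X i S)"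
      unfolding X_def by (simp add: measure_pmf.finite_measure_subadditive_finite)
  qed (use integrable_X in \<open>auto intro!: integrable_measure_pmf_bounded[where B=1]\<close>)
  also have "\<dots> = (\<Sum>i<s. ?E (X i))"
    using integrable_X by (simp add: Bochner_Integration.integral_sum)
  also have "\<dots> \<le> (\<Sum>i<s. p i * eps' + 4 * real m / real N)"
  proof (rule sum_mono)
    fix i assume "i \<in> {..<s}"
    have "0 < N" if "0 < m"
    proof -
      have "0 < 4 * real s * real m"
        using that \<open>i \<in> {..<s}\<close> by simp
      then show ?thesis
        using N by (cases "N = 0") auto
    qed
    then show "?E (X i) \<le> p i * eps' + 4 * real m / real N"
      unfolding X_def p_def
      using \<open>i \<in> {..<s}\<close> by (intro expected_error_on_subcube_le[OF fin _ learn first]) auto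
  qed
  also have "\<dots> = (\<Sum>i<s. p i) * eps' + real s * (4 * real m / real N)"
    by (simp add: sum.distrib sum_distrib_right)
  also have "\<dots> \<le> 1 * eps' + eps'"
  proof (intro add_mono mult_right_mono)
    have "disjoint_family_on (\<lambda>i. {x. in_restr x (\<rho>s ! i)}) {..<s}"
      using disjoint unfolding disjoint_family_on_def by auto
    then have "(\<Sum>i<s. p i) = measure_pmf.prob D (\<Union>i<s. {x. in_restr x (\<rho>s ! i)})"
      unfolding p_def by (intro measure_pmf.finite_measure_finite_Union[symmetric]) auto
    then show "(\<Sum>i<s. p i) \<le> 1"
      by simp
    show "real s * (4 * real m / real N) \<le> eps'"
      using N eps'_nonneg by (cases "N = 0") (auto simp: field_simps)
  qed (use eps'_nonneg in simp)
  finally show ?thesis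
    by simp
qed

lemma finite_set_pmf_cube:
  assumes "set_pmf D \<subseteq> {x :: point. length x = n}"
  shows "finite (set_pmf D)"
  by (rule finite_subset[OF assms]) (use finite_lists_length_eq[of "UNIV :: bool set" n] in simp)

lemma expectation_pair_pmf_le:
  fixes f :: "'a \<times> 'b \<Rightarrow> real" and g :: "'a \<Rightarrow> real"
  assumes f_bounded: "\<And>z. \<bar>f z\<bar> \<le> 1" and g_bounded: "\<And>x. \<bar>g x\<bar> \<le> 1"
    and inner: "\<And>x. measure_pmf.expectation M2 (\<lambda>y. f (x, y)) \<le> a * g x + b"
  shows "measure_pmf.expectation (pair_pmf M1 M2) f \<le> a * measure_pmf.expectation M1 g + b"
proof -
  have integrable_g: "integrable (measure_pmf M1) g"
    using g_bounded by (intro integrable_measure_pmf_bounded[where B=1])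
  have "measure_pmf.expectation (pair_pmf M1 M2) f =
      measure_pmf.expectation M1 (\<lambda>x. measure_pmf.expectation M2 (\<lambda>y. f (x, y)))"
    by (rule expectation_pair_pmf[OF f_bounded])
  also have "\<dots> \<le> measure_pmf.expectation M1 (\<lambda>x. a * g x + b)"
  proof (rule integral_mono)
    show "integrable (measure_pmf M1) (\<lambda>x. measure_pmf.expectation M2 (\<lambda>y. f (x, y)))"
      using f_bounded by (intro integrable_measure_pmf_bounded[where B=1] abs_expectation_pmf_le)
  qed (use inner integrable_g in simp_all)
  also have "\<dots> = a * measure_pmf.expectation M1 g + b"
    using integrable_g by simp
  finally show ?thesis .
qed

lemma expected_test_error_le:
  fixes P :: "(point \<times> bool) pmf" and A :: "sample \<Rightarrow> hyp"
  assumes n: "2 \<le> n" and d: "1 \<le> d" and eps: "0 < eps" "eps < 1" and L_ge_1: "1 \<le> ln (1 / eps)"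
    and s_pos: "0 < s" and length_\<rho>s: "length \<rho>s = s"
    and pieces: "\<forall>i<s. \<rho>s ! i \<in> restrs n d"
    and cover: "\<forall>z\<in>set_pmf P. \<exists>i<s. in_restr (fst z) (\<rho>s ! i)"
    and disjoint: "\<forall>i<s. \<forall>j<s. i \<noteq> j \<longrightarrow> \<not> (\<exists>x. in_restr x (\<rho>s ! i) \<and> in_restr x (\<rho>s ! j))"
  defines "N \<equiv> nat \<lceil>40 * (real s * real d * ln (real n) * (ln (1 / eps)) ^ 3 / eps ^ 2)\<rceil>"
  shows "measure_pmf.expectation (replicate_pmf N P) (\<lambda>S'. error_opt (partition_learn A n d s eps S S') P)
         \<le> 4 * (ln (1 / eps) + 1) * measure_pmf.prob P
              {(x, y). \<exists>i<s. in_restr x (\<rho>s ! i) \<and> A (restrict_sample (\<rho>s ! i) S) x \<noteq> y}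
           + 4 * eps"
proof -
  define \<Lambda> where "\<Lambda> = {L. set L \<subseteq> restrs n d \<and> length L \<le> nat \<lceil>2 * real s * ln (1 / eps)\<rceil>}"
  have "0 < 40 * (real s * real d * ln (real n) * (ln (1 / eps)) ^ 3 / eps ^ 2)"
    using s_pos d n L_ge_1 eps by simp
  then have N_pos: "0 < N"
    unfolding N_def by linarith
  have "real (card \<Lambda>) * exp (- real N * eps / 2) \<le> eps"
    unfolding \<Lambda>_def card_lists_length_le[OF finite_restrs]
    using s_pos L_ge_1 card_restrs_pos card_restrs_le_exp[OF n] real_nat_ceiling_ge
    by (intro union_bound_term_le[OF n d _ eps _ refl]) (auto simp: N_def)
  then show ?thesis
    using expected_error_find_subcube_list_le[OF N_pos eps s_pos length_\<rho>s pieces cover disjoint,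
        where H="\<lambda>\<rho>. A (restrict_sample \<rho> S)", folded \<Lambda>_def]
    by (simp add: partition_learn_def Let_def)
qed

lemma partition_learn_expected_error_le:
  fixes \<D> :: "point pmf set" and Dstar :: "point pmf" and A :: "sample \<Rightarrow> hyp"
  assumes n: "2 \<le> n" and d: "1 \<le> d" and eps: "0 < eps" "eps < 1"
    and supp: "set_pmf Dstar \<subseteq> {x. length x = n}"
    and part: "has_subcube_partition n d s Dstar \<D>" and learn: "learns A C \<D> m (eps / ln (1 / eps))"
    and first: "uses_first m A" and "f \<in> C"
  shows "measure_pmf.expectation
     (pair_pmf (replicate_pmf (nat \<lceil>4 * (real s * ln (1 / eps) / eps) * real m\<rceil>) (labeled Dstar f))
               (replicate_pmf (nat \<lceil>40 * (real s * real d * ln (real n) * (ln (1 / eps)) ^ 3 / eps ^ 2)\<rceil>) (labeled Dstar f)))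
     (\<lambda>(Strain, Stest). error_opt (partition_learn A n d s eps Strain Stest) (labeled Dstar f)) \<le> 100 * eps"
    (is "measure_pmf.expectation (pair_pmf (replicate_pmf ?Ntr ?P) (replicate_pmf ?Nte ?P)) ?err \<le> _")
proof -
  define Lg where "Lg = ln (1 / eps)"
  have err_bounded: "\<bar>?err z\<bar> \<le> 1" for z
    by (auto simp: error_opt_def case_prod_unfold)
  obtain \<rho>s where length_\<rho>s: "length \<rho>s = s"
    and shape: "\<forall>i<s. length (\<rho>s ! i) = n \<and> depth (\<rho>s ! i) \<le> d"
    and disjoint: "\<forall>i<s. \<forall>j<s. i \<noteq> j \<longrightarrow> \<not> (\<exists>x. in_restr x (\<rho>s ! i) \<and> in_restr x (\<rho>s ! j))"
    and cover: "\<forall>x\<in>set_pmf Dstar. \<exists>i<s. in_restr x (\<rho>s ! i)"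
    and pieces_in: "\<forall>i<s. measure_pmf.prob Dstar {x. in_restr x (\<rho>s ! i)} > 0 \<longrightarrow> restrict_pmf Dstar (\<rho>s ! i) \<in> \<D>"
    using part unfolding has_subcube_partition_def by blast
  have s_pos: "0 < s"
    using cover set_pmf_not_empty[of Dstar] by fastforce
  show ?thesis
  proof (cases "Lg < 1")
    case True
    have "1 / eps = exp Lg"
      using eps by (simp add: Lg_def)
    also have "\<dots> < exp 1"
      using True by simp
    also have "\<dots> \<le> 3"
      by (rule exp_le)
    finally have "1 \<le> 100 * eps"
      using eps by (simp add: divide_less_eq)
    moreover have "measure_pmf.expectation (pair_pmf (replicate_pmf ?Ntr ?P) (replicate_pmf ?Nte ?P)) ?err \<le> 1"
      using err_bounded by (intro measure_pmf.integral_le_const integrable_measure_pmf_bounded[where B=1])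
        (auto simp: abs_le_iff)
    ultimately show ?thesis
      by linarith
  next
    case False
    then have Lg_ge_1: "1 \<le> Lg"
      by simp
    define W where "W S = measure_pmf.prob ?P
      {(x, y). \<exists>i<s. in_restr x (\<rho>s ! i) \<and> A (restrict_sample (\<rho>s ! i) S) x \<noteq> y}" for S
    have "measure_pmf.expectation (replicate_pmf ?Ntr ?P) W \<le> 2 * (eps / Lg)"
      unfolding W_def
    proof (rule expected_partition_error_le[OF finite_set_pmf_cube[OF supp] disjoint _ first])
      show "measure_pmf.expectation (replicate_pmf m (labeled (restrict_pmf Dstar (\<rho>s ! i)) f))
          (\<lambda>S. error (A S) (labeled (restrict_pmf Dstar (\<rho>s ! i)) f)) \<le> eps / Lg"
        if "i < s" and "measure_pmf.prob Dstar {x. in_restr x (\<rho>s ! i)} > 0" for i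
        using learn \<open>f \<in> C\<close> pieces_in that unfolding learns_def Lg_def by blast
      have "4 * real s * real m \<le> eps / Lg * (4 * (real s * Lg / eps) * real m)"
        using eps Lg_ge_1 by (simp add: field_simps)
      also have "\<dots> \<le> eps / Lg * real ?Ntr"
        using eps Lg_ge_1 unfolding Lg_def by (intro mult_left_mono real_nat_ceiling_ge) auto
      finally show "4 * real s * real m \<le> eps / Lg * real ?Ntr" .
    qed (use eps Lg_ge_1 in simp)
    moreover have "measure_pmf.expectation (pair_pmf (replicate_pmf ?Ntr ?P) (replicate_pmf ?Nte ?P)) ?err
        \<le> 4 * (Lg + 1) * measure_pmf.expectation (replicate_pmf ?Ntr ?P) W + 4 * eps"
    proof (rule expectation_pair_pmf_le[OF err_bounded])
      have "\<forall>i<s. \<rho>s ! i \<in> restrs n d"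
        using shape by (simp add: restrs_def)
      moreover have "\<forall>z\<in>set_pmf ?P. \<exists>i<s. in_restr (fst z) (\<rho>s ! i)"
        using cover by (auto simp: labeled_def)
      ultimately show "measure_pmf.expectation (replicate_pmf ?Nte ?P) (\<lambda>S'. ?err (S, S')) \<le> 4 * (Lg + 1) * W S + 4 * eps" for S
        using expected_test_error_le[OF n d eps Lg_ge_1[unfolded Lg_def] s_pos length_\<rho>s _ _ disjoint]
        by (simp add: W_def Lg_def)
    qed (simp add: W_def)
    moreover have "4 * (Lg + 1) * (2 * (eps / Lg)) + 4 * eps \<le> 100 * eps"
      using eps Lg_ge_1 by (simp add: field_simps)
    ultimately show ?thesis
      using mult_left_mono[of _ "2 * (eps / Lg)" "4 * (Lg + 1)"] Lg_ge_1 by fastforce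
  qed
qed

theorem lemma7p3:
  shows "\<exists>c1 c2 c3 :: real. c1 > 0 \<and> c2 > 0 \<and> c3 > 0 \<and>
    (\<forall>(n::nat) (C :: (point \<Rightarrow> bool) set) (\<D> :: point pmf set) (Dstar :: point pmf)
       (d::nat) (s::nat) (eps::real) (A :: sample \<Rightarrow> hyp) (m::nat) (f :: point \<Rightarrow> bool).
       2 \<le> n \<longrightarrow> 1 \<le> d \<longrightarrow> 0 < eps \<longrightarrow> eps < 1 \<longrightarrow>
       set_pmf Dstar \<subseteq> {x. length x = n} \<longrightarrow>
       closed_under_restrictions n \<D> \<longrightarrow>
       has_subcube_partition n d s Dstar \<D> \<longrightarrow>
       learns A C \<D> m (eps / ln (1 / eps)) \<longrightarrow>
       uses_first m A \<longrightarrow>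
       f \<in> C \<longrightarrow>
       (let mtrain = nat \<lceil>c1 * (real s * ln (1 / eps) / eps) * real m\<rceil>;
            mtest = nat \<lceil>c2 * (real s * real d * ln (real n) * (ln (1 / eps)) ^ 3 / eps ^ 2)\<rceil>
        in measure_pmf.expectation
             (pair_pmf (replicate_pmf mtrain (labeled Dstar f)) (replicate_pmf mtest (labeled Dstar f)))
             (\<lambda>(Strain, Stest). error_opt (partition_learn A n d s eps Strain Stest) (labeled Dstar f))
           \<le> c3 * eps))"
  by (rule exI[of _ 4], rule exI[of _ 40], rule exI[of _ 100], unfold Let_def)
    (intro conjI allI impI; (rule partition_learn_expected_error_le; assumption)?; simp)

end
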